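(* Let $\Bbbk$ be a field of characteristic zero, let $U(3)$ be the associative conformal algebra defined below, and for $\alpha,\Delta\in\Bbbk$ let $M_{(\alpha,\Delta)}$ be the conformal $U(3)$-module defined below. If $\Delta\neq 0$, then \[ \dim_\Bbbk H^1(U(3),M_{(\alpha,\Delta)})=\begin{cases}2, & \Delta=1 \text{ and } \alpha=0,\\ 0, & \text{otherwise.}\end{cases} \]
   Context: A conformal algebra over $\Bbbk$ is a $\Bbbk[\partial]$-module $C$ with a bilinear $\lambda$-product $(a\,{}_{\lambda}\,b)=\sum_{n\ge0}\frac{\lambda^n}{n!}(a\,{}_{(n)}\,b)\in C[\lambda]$ (finitely many nonzero $n$-products) satisfying $(\partial a\,{}_\lambda\, b)=-\lambda(a\,{}_\lambda\, b)$ and $(a\,{}_\lambda\,\partial b)=(\partial+\lambda)(a\,{}_\lambda\, b)$; it is associative if $a\,{}_\lambda(b\,{}_\mu c)=(a\,{}_\lambda b)\,{}_{\lambda+\mu} c$. $U(3)$ is the associative conformal algebra generated by one element $v$ subject to the relations $v\,{}_{(n)}\,v=0$ for all $n\ge 3$ and $2\,v\,{}_{(1)}\,v-\partial(v\,{}_{(2)}\,v)=2v$ (equivalently, the universal associative conformal envelope of the Virasoro Lie conformal algebra $[v\,{}_\lambda\, v]=(\partial+2\lambda)v$ in which $v\,{}_{(n)}\,v=0$ for $n\ge3$). A left conformal module over an associative conformal algebra $C$ is a $\Bbbk[\partial]$-module $M$ with a bilinear map $C\otimes M\to M[\lambda]$, $a\otimes m\mapsto a\,{}_\lambda\, m$,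 satisfying $(\partial a)\,{}_\lambda m=-\lambda(a\,{}_\lambda m)$, $a\,{}_\lambda\,\partial m=(\partial+\lambda)(a\,{}_\lambda m)$, $a\,{}_\lambda(b\,{}_\mu m)=(a\,{}_\lambda b)\,{}_{\lambda+\mu}m$. For $\alpha,\Delta\in\Bbbk$, $M_{(\alpha,\Delta)}=\Bbbk[\partial]u$ is the free rank-one $\Bbbk[\partial]$-module with $v\,{}_\lambda\, u=(\alpha+\partial+\Delta\lambda)u$; this is a conformal $U(3)$-module for all $\alpha,\Delta$. Hochschild cohomology: the basic complex $\tilde C^n(C,M)$ ($n\ge1$) consists of maps $\varphi_{\bar\lambda}:C^{\otimes n}\to M[\lambda_1,\dots,\lambda_n]$ with $\varphi_{\bar\lambda}(a_1,\dots,\partial a_i,\dots,a_n)=-\lambda_i\varphi_{\bar\lambda}(a_1,\dots,a_n)$, and $\tilde C^0=M$; the differential is $(d\varphi)_{\bar\lambda}(a_1,\dots,a_{n+1})=a_1\,{}_{\lambda_1}\varphi_{(\lambda_2,\dots,\lambda_{n+1})}(a_2,\dots,a_{n+1})+\sum_{i=1}^n(-1)^i\varphi_{(\lambda_1,\dots,\lambda_i+\lambda_{i+1},\dots,\lambda_{n+1})}(a_1,\dots,a_i\,{}_{\lambda_i}a_{i+1},\dots,a_{n+1})$ (for $n=0$: $(dm)_\lambda(a)=a\,{}_\lambda m$). Each $\tilde C^n$ is a $\Bbbk[\partial]$-module via $(\partial\varphi)_{\bar\lambda}=(\partial+\sum_i\lambda_i)\varphi_{\bar\lambda}$, commuting with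 $d$; $H^n(C,M)$ denotes the cohomology of the reduced Hochschild complex $C^\bullet(C,M)=\tilde C^\bullet(C,M)/\partial\tilde C^\bullet(C,M)$. *)

theory Defs
  imports "HOL-Computational_Algebra.Polynomial"
begin

text \<open>Operations are explicit (not type classes) so that
  several structures on the same type can be compared (universal property).\<close>

record ('k, 'c) conf_alg =
  cadd  :: "'c \<Rightarrow> 'c \<Rightarrow> 'c"
  czero :: "'c"
  cneg  :: "'c \<Rightarrow> 'c"
  csmul :: "'k \<Rightarrow> 'c \<Rightarrow> 'c"
  cder  :: "'c \<Rightarrow> 'c"
  cprod :: "nat \<Rightarrow> 'c \<Rightarrow> 'c \<Rightarrow> 'c"

fun csumn :: "('k, 'c, 'z) conf_alg_scheme \<Rightarrow> (nat \<Rightarrow> 'c) \<Rightarrow> nat \<Rightarrow> 'c" where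
  "csumn C f 0 = czero C"
| "csumn C f (Suc n) = cadd C (csumn C f n) (f n)"

definition kspace :: "('k::field, 'c) conf_alg \<Rightarrow> bool" where
  "kspace C \<longleftrightarrow>
     (\<forall>a b c. cadd C (cadd C a b) c = cadd C a (cadd C b c)) \<and>
     (\<forall>a b. cadd C a b = cadd C b a) \<and>
     (\<forall>a. cadd C (czero C) a = a) \<and>
     (\<forall>a. cadd C (cneg C a) a = czero C) \<and>
     (\<forall>r a b. csmul C r (cadd C a b) = cadd C (csmul C r a) (csmul C r b)) \<and>
     (\<forall>r s a. csmul C (r + s) a = cadd C (csmul C r a) (csmul C s a)) \<and>
     (\<forall>r s a. csmul C (r * s) a = csmul C r (csmul C s a)) \<and>
     (\<forall>a. csmul C 1 a = a)"

text \<open>The lambda-product is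
  (a_\<lambda> b) = \<Sum>_n \<lambda>^n/n! a_(n) b; the identities of the definition are written
  out coefficientwise in \<lambda> (and \<mu>):
  (\<partial>a)_\<lambda> b = -\<lambda>(a_\<lambda> b)         iff  (\<partial>a)_(0) b = 0, (\<partial>a)_(n+1) b = -(n+1) a_(n) b;
  a_\<lambda> \<partial>b = (\<partial>+\<lambda>)(a_\<lambda> b)      iff  a_(n) \<partial>b = \<partial>(a_(n) b) + n a_(n-1) b;
  a_\<lambda>(b_\<mu> c) = (a_\<lambda> b)_{\<lambda>+\<mu>} c  iff  a_(n)(b_(m) c) = \<Sum>_{i\<le>n} (n choose i) (a_(n-i) b)_(m+i) c.\<close>
definition assoc_conf :: "('k::field_char_0, 'c) conf_alg \<Rightarrow> bool" where
  "assoc_conf C \<longleftrightarrow>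
     kspace C \<and>
     \<comment> \<open>k[\<partial>]-module: \<partial> is k-linear\<close>
     (\<forall>a b. cder C (cadd C a b) = cadd C (cder C a) (cder C b)) \<and>
     (\<forall>r a. cder C (csmul C r a) = csmul C r (cder C a)) \<and>
     \<comment> \<open>bilinearity of the n-products\<close>
     (\<forall>n a b c. cprod C n (cadd C a b) c = cadd C (cprod C n a c) (cprod C n b c)) \<and>
     (\<forall>n a b c. cprod C n a (cadd C b c) = cadd C (cprod C n a b) (cprod C n a c)) \<and>
     (\<forall>n r a b. cprod C n (csmul C r a) b = csmul C r (cprod C n a b)) \<and>
     (\<forall>n r a b. cprod C n a (csmul C r b) = csmul C r (cprod C n a b)) \<and>
     \<comment> \<open>locality: finitely many nonzero n-products\<close>
     (\<forall>a b. \<exists>N. \<forall>n\<ge>N. cprod C n a b = czero C) \<and>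
     \<comment> \<open>sesquilinearity\<close>
     (\<forall>a b. cprod C 0 (cder C a) b = czero C) \<and>
     (\<forall>n a b. cprod C (Suc n) (cder C a) b = csmul C (- of_nat (Suc n)) (cprod C n a b)) \<and>
     (\<forall>a b. cprod C 0 a (cder C b) = cder C (cprod C 0 a b)) \<and>
     (\<forall>n a b. cprod C (Suc n) a (cder C b) =
              cadd C (cder C (cprod C (Suc n) a b)) (csmul C (of_nat (Suc n)) (cprod C n a b))) \<and>
     \<comment> \<open>associativity\<close>
     (\<forall>n m a b c. cprod C n a (cprod C m b c) =
        csumn C (\<lambda>i. csmul C (of_nat (n choose i)) (cprod C (m + i) (cprod C (n - i) a b) c)) (Suc n))"

definition conf_hom :: "('k, 'c) conf_alg \<Rightarrow> ('k, 'c) conf_alg \<Rightarrow> ('c \<Rightarrow> 'c) \<Rightarrow> bool" where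
  "conf_hom C A f \<longleftrightarrow>
     (\<forall>a b. f (cadd C a b) = cadd A (f a) (f b)) \<and>
     (\<forall>r a. f (csmul C r a) = csmul A r (f a)) \<and>
     (\<forall>a. f (cder C a) = cder A (f a)) \<and>
     (\<forall>n a b. f (cprod C n a b) = cprod A n (f a) (f b))"

definition U3_rels :: "('k::field_char_0, 'c) conf_alg \<Rightarrow> 'c \<Rightarrow> bool" where
  "U3_rels A w \<longleftrightarrow>
     (\<forall>n\<ge>3. cprod A n w w = czero A) \<and>
     cadd A (csmul A 2 (cprod A 1 w w)) (cneg A (cder A (cprod A 2 w w))) = csmul A 2 w"

definition conf_generates :: "('k, 'c) conf_alg \<Rightarrow> 'c \<Rightarrow> bool" where
  "conf_generates C v \<longleftrightarrow>
     (\<forall>S. v \<in> S \<and> czero C \<in> S \<and>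
          (\<forall>a\<in>S. \<forall>b\<in>S. cadd C a b \<in> S) \<and>
          (\<forall>r. \<forall>a\<in>S. csmul C r a \<in> S) \<and>
          (\<forall>a\<in>S. cder C a \<in> S) \<and>
          (\<forall>n. \<forall>a\<in>S. \<forall>b\<in>S. cprod C n a b \<in> S) \<longrightarrow> S = UNIV)"

text \<open>(C, v) is (a copy of) U(3): an associative conformal algebra generated by v,
  satisfying the relations, universal among associative conformal algebras
  (on the same carrier type) with an element satisfying the relations.\<close>
definition is_U3 :: "('k::field_char_0, 'c) conf_alg \<Rightarrow> 'c \<Rightarrow> bool" where
  "is_U3 C v \<longleftrightarrow>
     assoc_conf C \<and> U3_rels C v \<and> conf_generates C v \<and> v \<noteq> czero C \<and>
     (\<forall>(A::('k, 'c) conf_alg) w. assoc_conf A \<and> U3_rels A w \<longrightarrow>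
        (\<exists>!f. conf_hom C A f \<and> f v = w))"

text \<open>M = k[\<partial>]u is identified with k[\<partial>]; M[\<lambda>_1,...,\<lambda>_n] = k[\<partial>,\<lambda>_1,...,\<lambda>_n] is represented
  by polynomial functions (k is infinite), the first argument being \<partial>.\<close>

definition poly1 :: "('k::comm_ring_1 \<Rightarrow> 'k) \<Rightarrow> bool" where
  "poly1 m \<longleftrightarrow> (\<exists>p::'k poly. \<forall>x. m x = poly p x)"

definition poly2 :: "('k::comm_ring_1 \<Rightarrow> 'k \<Rightarrow> 'k) \<Rightarrow> bool" where
  "poly2 f \<longleftrightarrow> (\<exists>p::'k poly poly. \<forall>x l. f x l = poly (poly p [:l:]) x)"

definition poly3 :: "('k::comm_ring_1 \<Rightarrow> 'k \<Rightarrow> 'k \<Rightarrow> 'k) \<Rightarrow> bool" where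
  "poly3 f \<longleftrightarrow> (\<exists>p::'k poly poly poly. \<forall>x l1 l2.
      f x l1 l2 = poly (poly (poly p [:[:l2:]:]) [:l1:]) x)"

definition loc_bound :: "('k, 'c) conf_alg \<Rightarrow> 'c \<Rightarrow> 'c \<Rightarrow> nat" where
  "loc_bound C a b = (LEAST N. \<forall>n\<ge>N. cprod C n a b = czero C)"

text \<open>act a m x l is the value of (a_\<lambda> m) \<in> M[\<lambda>] at \<partial> = x, \<lambda> = l.\<close>
definition conf_module ::
  "('k::field_char_0, 'c) conf_alg \<Rightarrow> ('c \<Rightarrow> ('k \<Rightarrow> 'k) \<Rightarrow> 'k \<Rightarrow> 'k \<Rightarrow> 'k) \<Rightarrow> bool" where
  "conf_module C act \<longleftrightarrow>
     (\<forall>a m. poly1 m \<longrightarrow> poly2 (act a m)) \<and>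
     (\<forall>a b m x l. poly1 m \<longrightarrow> act (cadd C a b) m x l = act a m x l + act b m x l) \<and>
     (\<forall>r a m x l. poly1 m \<longrightarrow> act (csmul C r a) m x l = r * act a m x l) \<and>
     (\<forall>a m m' x l. poly1 m \<longrightarrow> poly1 m' \<longrightarrow>
        act a (\<lambda>y. m y + m' y) x l = act a m x l + act a m' x l) \<and>
     (\<forall>r a m x l. poly1 m \<longrightarrow> act a (\<lambda>y. r * m y) x l = r * act a m x l) \<and>
     \<comment> \<open>(\<partial>a)_\<lambda> m = -\<lambda>(a_\<lambda> m)\<close>
     (\<forall>a m x l. poly1 m \<longrightarrow> act (cder C a) m x l = - l * act a m x l) \<and>
     \<comment> \<open>a_\<lambda> \<partial>m = (\<partial>+\<lambda>)(a_\<lambda> m)\<close>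
     (\<forall>a m x l. poly1 m \<longrightarrow> act a (\<lambda>y. y * m y) x l = (x + l) * act a m x l) \<and>
     \<comment> \<open>a_\<lambda>(b_\<mu> m) = (a_\<lambda> b)_{\<lambda>+\<mu>} m\<close>
     (\<forall>a b m x l1 l2 N. poly1 m \<longrightarrow> (\<forall>n\<ge>N. cprod C n a b = czero C) \<longrightarrow>
        act a (\<lambda>y. act b m y l2) x l1 =
        (\<Sum>n<N. l1 ^ n / fact n * act (cprod C n a b) m x (l1 + l2)))"

text \<open>1-cochains \<phi>_\<lambda> : C \<rightarrow> M[\<lambda>]; \<phi> a x l = value at \<partial> = x, \<lambda> = l.\<close>
definition cochain1 :: "('k::field_char_0, 'c) conf_alg \<Rightarrow> ('c \<Rightarrow> 'k \<Rightarrow> 'k \<Rightarrow> 'k) \<Rightarrow> bool" where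
  "cochain1 C \<phi> \<longleftrightarrow>
     (\<forall>a. poly2 (\<phi> a)) \<and>
     (\<forall>a b x l. \<phi> (cadd C a b) x l = \<phi> a x l + \<phi> b x l) \<and>
     (\<forall>r a x l. \<phi> (csmul C r a) x l = r * \<phi> a x l) \<and>
     (\<forall>a x l. \<phi> (cder C a) x l = - l * \<phi> a x l)"

definition cochain2 ::
  "('k::field_char_0, 'c) conf_alg \<Rightarrow> ('c \<Rightarrow> 'c \<Rightarrow> 'k \<Rightarrow> 'k \<Rightarrow> 'k \<Rightarrow> 'k) \<Rightarrow> bool" where
  "cochain2 C \<psi> \<longleftrightarrow>
     (\<forall>a b. poly3 (\<psi> a b)) \<and>
     (\<forall>a a' b x l1 l2. \<psi> (cadd C a a') b x l1 l2 = \<psi> a b x l1 l2 + \<psi> a' b x l1 l2) \<and>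
     (\<forall>a b b' x l1 l2. \<psi> a (cadd C b b') x l1 l2 = \<psi> a b x l1 l2 + \<psi> a b' x l1 l2) \<and>
     (\<forall>r a b x l1 l2. \<psi> (csmul C r a) b x l1 l2 = r * \<psi> a b x l1 l2) \<and>
     (\<forall>r a b x l1 l2. \<psi> a (csmul C r b) x l1 l2 = r * \<psi> a b x l1 l2) \<and>
     (\<forall>a b x l1 l2. \<psi> (cder C a) b x l1 l2 = - l1 * \<psi> a b x l1 l2) \<and>
     (\<forall>a b x l1 l2. \<psi> a (cder C b) x l1 l2 = - l2 * \<psi> a b x l1 l2)"

definition hd0 :: "('c \<Rightarrow> ('k \<Rightarrow> 'k) \<Rightarrow> 'k \<Rightarrow> 'k \<Rightarrow> 'k) \<Rightarrow> ('k \<Rightarrow> 'k) \<Rightarrow> 'c \<Rightarrow> 'k \<Rightarrow> 'k \<Rightarrow> 'k" where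
  "hd0 act m = (\<lambda>a x l. act a m x l)"

definition hd1 ::
  "('k::field_char_0, 'c) conf_alg \<Rightarrow> ('c \<Rightarrow> ('k \<Rightarrow> 'k) \<Rightarrow> 'k \<Rightarrow> 'k \<Rightarrow> 'k) \<Rightarrow>
   ('c \<Rightarrow> 'k \<Rightarrow> 'k \<Rightarrow> 'k) \<Rightarrow> 'c \<Rightarrow> 'c \<Rightarrow> 'k \<Rightarrow> 'k \<Rightarrow> 'k \<Rightarrow> 'k" where
  "hd1 C act \<phi> = (\<lambda>a b x l1 l2.
      act a (\<lambda>y. \<phi> b y l2) x l1
      - (\<Sum>n<loc_bound C a b. l1 ^ n / fact n * \<phi> (cprod C n a b) x (l1 + l2)))"

text \<open>Cocycles of the reduced complex in degree 1: d\<phi> \<in> \<partial> C~^2, where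
  (\<partial>\<chi>)_{\<lambda>1,\<lambda>2} = (\<partial>+\<lambda>1+\<lambda>2)\<chi>_{\<lambda>1,\<lambda>2}.\<close>
definition Z1 :: "('k::field_char_0, 'c) conf_alg \<Rightarrow> ('c \<Rightarrow> ('k \<Rightarrow> 'k) \<Rightarrow> 'k \<Rightarrow> 'k \<Rightarrow> 'k) \<Rightarrow>
   ('c \<Rightarrow> 'k \<Rightarrow> 'k \<Rightarrow> 'k) set" where
  "Z1 C act = {\<phi>. cochain1 C \<phi> \<and>
      (\<exists>\<chi>. cochain2 C \<chi> \<and>
         (\<forall>a b x l1 l2. hd1 C act \<phi> a b x l1 l2 = (x + l1 + l2) * \<chi> a b x l1 l2))}"

text \<open>Coboundaries of the reduced complex in degree 1 (as representatives in C~^1):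
  d(M) + \<partial> C~^1, where (\<partial>\<psi>)_\<lambda> = (\<partial>+\<lambda>)\<psi>_\<lambda>.\<close>
definition B1 :: "('k::field_char_0, 'c) conf_alg \<Rightarrow> ('c \<Rightarrow> ('k \<Rightarrow> 'k) \<Rightarrow> 'k \<Rightarrow> 'k \<Rightarrow> 'k) \<Rightarrow>
   ('c \<Rightarrow> 'k \<Rightarrow> 'k \<Rightarrow> 'k) set" where
  "B1 C act = {\<phi>. \<exists>m \<psi>. poly1 m \<and> cochain1 C \<psi> \<and>
      (\<forall>a x l. \<phi> a x l = hd0 act m a x l + (x + l) * \<psi> a x l)}"

definition quot_dim_eq :: "('c \<Rightarrow> 'k::field \<Rightarrow> 'k \<Rightarrow> 'k) set \<Rightarrow> ('c \<Rightarrow> 'k \<Rightarrow> 'k \<Rightarrow> 'k) set \<Rightarrow> nat \<Rightarrow> bool" where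
  "quot_dim_eq Z B n \<longleftrightarrow>
     (\<exists>S. finite S \<and> card S = n \<and> S \<subseteq> Z \<and>
        (\<forall>c. (\<lambda>a x l. \<Sum>s\<in>S. c s * s a x l) \<in> B \<longrightarrow> (\<forall>s\<in>S. c s = 0)) \<and>
        (\<forall>\<phi>\<in>Z. \<exists>c. (\<lambda>a x l. \<phi> a x l - (\<Sum>s\<in>S. c s * s a x l)) \<in> B))"

definition H1_dim_eq :: "('k::field_char_0, 'c) conf_alg \<Rightarrow> ('c \<Rightarrow> ('k \<Rightarrow> 'k) \<Rightarrow> 'k \<Rightarrow> 'k \<Rightarrow> 'k) \<Rightarrow> nat \<Rightarrow> bool" where
  "H1_dim_eq C act n \<longleftrightarrow> quot_dim_eq (Z1 C act) (B1 C act) n"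

end

theory Submission
  imports Defs
begin

text \<open>
  For a 1-cochain \<open>\<phi>\<close> put \<open>g a t = \<phi> a (- t) t\<close>, its value at \<open>\<partial> = -\<lambda>\<close>. At
  \<open>\<partial> = -\<lambda>\<^sub>1 - \<lambda>\<^sub>2\<close> the coboundary term of the cocycle condition vanishes, so \<open>g\<close> is
  multiplicative against \<open>Q\<^sub>a = a\<^sub>\<lambda> u\<close>; as \<open>v\<close> generates \<open>U(3)\<close>, \<open>g\<close> is determined by
  \<open>g v\<close>. Conversely a cocycle with \<open>g = 0\<close> is a coboundary, since whatever vanishes at
  \<open>\<partial> = -\<lambda>\<close> is divisible by \<open>\<partial> + \<lambda>\<close>. The relations of \<open>v\<close> force
  \<open>g v t = p\<^sub>0 + p\<^sub>1 t\<close> with \<open>p\<^sub>0 (1 - \<Delta>) + p\<^sub>1 \<alpha> = 0\<close>, while the coboundary \<open>d(c u)\<close> has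
  \<open>g v t = c (\<alpha> + (\<Delta> - 1) t)\<close>. These exhaust the solutions unless \<open>(\<alpha>, \<Delta>) = (0, 1)\<close>,
  where coboundaries have \<open>g = 0\<close> and \<open>g v\<close> may be any linear polynomial. Both \<open>1\<close> and
  \<open>t\<close> occur: a map \<open>G : U(3) \<rightarrow> M\<close> with \<open>G(a\<^sub>(\<^sub>n\<^sub>) b) = a\<^sub>(\<^sub>n\<^sub>) G(b)\<close> yields the cocycle
  \<open>\<phi>\<^sub>\<lambda>(a) = G(a)(-\<lambda>) u\<close>, and \<open>G\<close> with \<open>G(v) = u\<close> or \<open>G(v) = \<partial>u\<close> exists by the universal
  property of \<open>U(3)\<close> applied to the split extension \<open>U(3) \<ltimes> M\<close>, carried over to the
  carrier of \<open>U(3)\<close> along a bijection.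
\<close>

section \<open>Vector spaces and polynomial functions\<close>

lemma kspaceD:
  assumes "kspace C"
  shows "cadd C (cadd C a b) c = cadd C a (cadd C b c)"
    "cadd C a b = cadd C b a"
    "cadd C (czero C) a = a"
    "cadd C (cneg C a) a = czero C"
    "csmul C r (cadd C a b) = cadd C (csmul C r a) (csmul C r b)"
    "csmul C (r + s) a = cadd C (csmul C r a) (csmul C s a)"
    "csmul C (r * s) a = csmul C r (csmul C s a)"
    "csmul C 1 a = a"
  using assms unfolding kspace_def by blast+

lemma kspace_add_zero_right: "kspace C \<Longrightarrow> cadd C a (czero C) = a"
  by (metis kspaceD(2,3))

lemma kspace_add_left_cancel:
  assumes "kspace C" "cadd C a b = cadd C a c"
  shows "b = c"
  by (metis assms kspaceD(1,3,4))

lemma kspace_add_idem_zero: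
  assumes "kspace C" "cadd C a a = a"
  shows "a = czero C"
  by (metis assms kspace_add_left_cancel kspace_add_zero_right)

lemma kspace_smul_zero: "kspace C \<Longrightarrow> csmul C r (czero C) = czero C"
  by (metis kspaceD(3,5) kspace_add_idem_zero)

lemma kspace_zero_smul: "kspace C \<Longrightarrow> csmul C 0 a = czero C"
  by (metis add_0 kspaceD(6) kspace_add_idem_zero)

lemma kspace_smul_left_inj:
  assumes "kspace C" "v \<noteq> czero C" "csmul C r v = csmul C s v"
  shows "r = s"
proof (rule ccontr)
  assume "r \<noteq> s"
  have "cadd C (csmul C s v) (csmul C (r - s) v) = cadd C (csmul C s v) (czero C)"
    using assms(3) kspaceD(6)[OF assms(1), of "r - s" s v]
    by (simp add: kspaceD(2,3)[OF assms(1)])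
  hence "csmul C (r - s) v = czero C" using kspace_add_left_cancel[OF assms(1)] by blast
  hence "csmul C (inverse (r - s) * (r - s)) v = czero C"
    by (simp add: kspaceD(7)[OF assms(1)] kspace_smul_zero[OF assms(1)])
  thus False using \<open>r \<noteq> s\<close> assms(2) by (simp add: kspaceD(8)[OF assms(1)])
qed

lemma additive_map_zero:
  fixes g :: "'c \<Rightarrow> 'a::cancel_comm_monoid_add"
  assumes "kspace C" "\<And>a b. g (cadd C a b) = g a + g b"
  shows "g (czero C) = 0"
  using assms(2)[of "czero C" "czero C"] by (simp add: kspaceD(3)[OF assms(1)])

lemma poly1_poly: "poly1 (poly p)"
  unfolding poly1_def by blast

lemma poly1_const: "poly1 (\<lambda>x. c)"
  unfolding poly1_def by (rule exI[of _ "[:c:]"]) simp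

lemma poly1_id: "poly1 (\<lambda>x. x)"
  unfolding poly1_def by (rule exI[of _ "[:0, 1:]"]) simp

lemma poly1_neg_id: "poly1 (\<lambda>x. - x)"
  unfolding poly1_def by (rule exI[of _ "[:0, -1:]"]) simp

lemma poly1_add: "poly1 f \<Longrightarrow> poly1 g \<Longrightarrow> poly1 (\<lambda>x. f x + g x)"
  unfolding poly1_def by (elim exE, rename_tac p q, rule_tac x = "p + q" in exI) simp

lemma poly1_mult: "poly1 f \<Longrightarrow> poly1 g \<Longrightarrow> poly1 (\<lambda>x. f x * g x)"
  unfolding poly1_def by (elim exE, rename_tac p q, rule_tac x = "p * q" in exI) simp

lemma poly1_comp_poly: "poly1 g \<Longrightarrow> poly1 (\<lambda>x. poly p (g x))"
  by (induction p) (auto intro: poly1_const poly1_mult poly1_add)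

lemma poly1_comp_neg:
  assumes "poly1 f"
  shows "poly1 (\<lambda>x. f (- x))"
proof -
  obtain p where "f = poly p" using assms unfolding poly1_def by blast
  thus ?thesis using poly1_comp_poly[OF poly1_neg_id, of p] by simp
qed

lemma poly2_l: "poly2 (\<lambda>x l. l)"
  unfolding poly2_def by (rule exI[of _ "[:0, 1:]"]) simp

lemma poly2_const: "poly2 (\<lambda>x l. c)"
  unfolding poly2_def by (rule exI[of _ "[:[:c:]:]"]) simp

lemma poly2_add: "poly2 f \<Longrightarrow> poly2 g \<Longrightarrow> poly2 (\<lambda>x l. f x l + g x l)"
  unfolding poly2_def by (elim exE, rename_tac p q, rule_tac x = "p + q" in exI) simp

lemma poly2_mult: "poly2 f \<Longrightarrow> poly2 g \<Longrightarrow> poly2 (\<lambda>x l. f x l * g x l)"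
  unfolding poly2_def by (elim exE, rename_tac p q, rule_tac x = "p * q" in exI) simp

lemma poly2_minus: "poly2 f \<Longrightarrow> poly2 (\<lambda>x l. - f x l)"
  unfolding poly2_def by (elim exE, rename_tac p, rule_tac x = "- p" in exI) simp

lemma poly2_diff: "poly2 f \<Longrightarrow> poly2 g \<Longrightarrow> poly2 (\<lambda>x l. f x l - g x l)"
  using poly2_add[OF _ poly2_minus] by simp

lemma poly2_comp_poly: "poly2 g \<Longrightarrow> poly2 (\<lambda>x l. poly p (g x l))"
  by (induction p) (auto intro: poly2_const poly2_mult poly2_add)

lemma poly3_const: "poly3 (\<lambda>x l1 l2. c)"
  unfolding poly3_def by (rule exI[of _ "[:[:[:c:]:]:]"]) simp

lemma poly3_x: "poly3 (\<lambda>x l1 l2. x)"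
  unfolding poly3_def by (rule exI[of _ "[:[:[:0, 1:]:]:]"]) simp

lemma poly3_l1: "poly3 (\<lambda>x l1 l2. l1)"
  unfolding poly3_def by (rule exI[of _ "[:[:0, 1:]:]"]) simp

lemma poly3_l2: "poly3 (\<lambda>x l1 l2. l2)"
  unfolding poly3_def by (rule exI[of _ "[:0, 1:]"]) simp

lemma poly3_add: "poly3 f \<Longrightarrow> poly3 g \<Longrightarrow> poly3 (\<lambda>x l1 l2. f x l1 l2 + g x l1 l2)"
  unfolding poly3_def by (elim exE, rename_tac p q, rule_tac x = "p + q" in exI) simp

lemma poly3_mult: "poly3 f \<Longrightarrow> poly3 g \<Longrightarrow> poly3 (\<lambda>x l1 l2. f x l1 l2 * g x l1 l2)"
  unfolding poly3_def by (elim exE, rename_tac p q, rule_tac x = "p * q" in exI) simp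

lemma poly3_minus: "poly3 f \<Longrightarrow> poly3 (\<lambda>x l1 l2. - f x l1 l2)"
  unfolding poly3_def by (elim exE, rename_tac p, rule_tac x = "- p" in exI) simp

lemma poly3_diff: "poly3 f \<Longrightarrow> poly3 g \<Longrightarrow> poly3 (\<lambda>x l1 l2. f x l1 l2 - g x l1 l2)"
  using poly3_add[OF _ poly3_minus] by simp

lemma poly3_pow: "poly3 f \<Longrightarrow> poly3 (\<lambda>x l1 l2. f x l1 l2 ^ n)"
  by (induction n) (auto intro: poly3_const poly3_mult)

lemma poly3_sum:
  "(\<And>i. i \<in> A \<Longrightarrow> poly3 (f i)) \<Longrightarrow> poly3 (\<lambda>x l1 l2. \<Sum>i\<in>A. f i x l1 l2)"
  by (induction A rule: infinite_finite_induct) (auto intro: poly3_const poly3_add)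

lemma poly3_comp_poly: "poly3 g \<Longrightarrow> poly3 (\<lambda>x l1 l2. poly p (g x l1 l2))"
  by (induction p) (auto intro: poly3_const poly3_mult poly3_add)

lemmas poly3_intros = poly3_const poly3_x poly3_l1 poly3_l2 poly3_add poly3_mult poly3_minus
  poly3_diff poly3_pow poly3_sum

lemma poly2_fix_snd: "poly2 f \<Longrightarrow> poly1 (\<lambda>x. f x l)"
  unfolding poly2_def poly1_def by blast

lemma poly3_fix_snd_thd: "poly3 f \<Longrightarrow> poly1 (\<lambda>x. f x l1 l2)"
  unfolding poly3_def poly1_def by blast

lemma poly2_antidiagonal:
  assumes "poly2 f"
  shows "poly1 (\<lambda>t. f (- t) t)"
proof -
  have "poly1 (\<lambda>t. poly (poly P [:t:]) (- t))" for P :: "'a poly poly"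
  proof (induction P)
    case (pCons a P)
    have "poly1 (\<lambda>t. poly a (- t) + t * poly (poly P [:t:]) (- t))"
      by (intro poly1_add poly1_mult poly1_comp_poly[OF poly1_neg_id] poly1_id pCons.IH)
    thus ?case by simp
  qed (simp add: poly1_const)
  thus ?thesis using assms unfolding poly2_def by auto
qed

lemma poly_altdef_lessThan:
  fixes p :: "'a::comm_semiring_1 poly"
  assumes "degree p < d"
  shows "poly p x = (\<Sum>i<d. coeff p i * x ^ i)"
  unfolding poly_altdef
  by (rule sum.mono_neutral_left) (use assms in \<open>auto simp: coeff_eq_0\<close>)

lemma poly2_double_sum:
  assumes "poly2 f"
  shows "\<exists>c d. \<forall>x l. f x l = (\<Sum>i<d. \<Sum>j<d. c i j * x ^ i * l ^ j)"
proof -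
  obtain P where P: "\<And>x l. f x l = poly (poly P [:l:]) x"
    using assms unfolding poly2_def by blast
  define d where "d = Suc (degree P + (\<Sum>j\<le>degree P. degree (coeff P j)))"
  have dP: "degree P < d" unfolding d_def by simp
  have dj: "degree (coeff P j) < d" for j
  proof (cases "j \<le> degree P")
    case True
    hence "degree (coeff P j) \<le> (\<Sum>j\<le>degree P. degree (coeff P j))"
      by (intro member_le_sum) auto
    thus ?thesis unfolding d_def by simp
  qed (simp add: coeff_eq_0 d_def)
  have "f x l = (\<Sum>i<d. \<Sum>j<d. coeff (coeff P j) i * x ^ i * l ^ j)" for x l
  proof -
    have "f x l = (\<Sum>j<d. poly (coeff P j) x * l ^ j)"
      by (simp add: P poly_altdef_lessThan[OF dP] poly_sum poly_power)
    also have "\<dots> = (\<Sum>j<d. \<Sum>i<d. coeff (coeff P j) i * x ^ i * l ^ j)"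
      by (simp add: poly_altdef_lessThan[OF dj] sum_distrib_right)
    also have "\<dots> = (\<Sum>i<d. \<Sum>j<d. coeff (coeff P j) i * x ^ i * l ^ j)"
      by (rule sum.swap)
    finally show ?thesis .
  qed
  thus ?thesis by (intro exI[of _ "\<lambda>i j. coeff (coeff P j) i"] exI[of _ d]) blast
qed

lemma poly1_eq_at_isolated_point:
  fixes g h :: "'k::field_char_0 \<Rightarrow> 'k"
  assumes "poly1 g" "poly1 h" "\<And>x. x \<noteq> y \<Longrightarrow> g x = h x"
  shows "g y = h y"
proof -
  obtain p q where p: "\<And>x. g x = poly p x" and q: "\<And>x. h x = poly q x"
    using assms(1,2) unfolding poly1_def by blast
  have "p - q = 0"
  proof (rule ccontr)
    assume "p - q \<noteq> 0"
    hence "finite {x. poly (p - q) x = 0}" by (rule poly_roots_finite)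
    moreover have "UNIV - {y} \<subseteq> {x. poly (p - q) x = 0}" using assms(3) p q by auto
    ultimately have "finite (UNIV - {y} :: 'k set)" by (rule finite_subset[rotated])
    hence "finite (UNIV :: 'k set)" by simp
    thus False using infinite_UNIV_char_0 by blast
  qed
  thus ?thesis using p q by simp
qed

lemma poly1_mult_linear_cancel:
  fixes A B :: "'k::field_char_0 \<Rightarrow> 'k"
  assumes "poly1 A" "poly1 B" "\<And>x. (x + c) * A x = (x + c) * B x"
  shows "A x = B x"
proof -
  have off: "A y = B y" if "y \<noteq> - c" for y
  proof -
    have "y + c \<noteq> 0" using that by (metis eq_neg_iff_add_eq_0)
    thus ?thesis using assms(3)[of y] by simp
  qed
  show ?thesis
  proof (cases "x = - c")
    case True
    thus ?thesis using poly1_eq_at_isolated_point[OF assms(1,2) off] by simp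
  qed (rule off)
qed

lemma power_sum_coeffs_zero:
  fixes c :: "nat \<Rightarrow> 'k::field_char_0"
  assumes "\<And>x. (\<Sum>n<N. c n * x ^ n) = 0" "n < N"
  shows "c n = 0"
proof -
  define p where "p = (\<Sum>n<N. monom (c n) n)"
  have "\<forall>x. poly p x = 0" using assms(1) by (simp add: p_def poly_sum poly_monom)
  hence "p = 0" using poly_all_0_iff_0 by blast
  hence "coeff p n = 0" by simp
  moreover have "coeff p n = c n" using assms(2) by (simp add: p_def coeff_sum)
  ultimately show ?thesis by simp
qed

lemma power_sum_coeffs_eq:
  fixes c d :: "nat \<Rightarrow> 'k::field_char_0"
  assumes "\<And>x. (\<Sum>n<N. c n * x ^ n) = (\<Sum>n<N. d n * x ^ n)" "n < N"
  shows "c n = d n"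
proof -
  have "(\<Sum>n<N. (c n - d n) * x ^ n) = 0" for x
    using assms(1)[of x] by (simp add: left_diff_distrib sum_subtractf)
  from power_sum_coeffs_zero[OF this assms(2)] show ?thesis by simp
qed

lemma double_power_sum_coeffs_eq:
  fixes c d :: "nat \<Rightarrow> nat \<Rightarrow> 'k::field_char_0"
  assumes "\<And>x y. (\<Sum>j<N. \<Sum>i<N. c i j * x ^ i * y ^ j) = (\<Sum>j<N. \<Sum>i<N. d i j * x ^ i * y ^ j)"
    and "i < N" "j < N"
  shows "c i j = d i j"
proof -
  have swap: "(\<Sum>j<N. \<Sum>i<N. e i j * x ^ i * y ^ j) = (\<Sum>i<N. (\<Sum>j<N. e i j * y ^ j) * x ^ i)"
    for e :: "nat \<Rightarrow> nat \<Rightarrow> 'k" and x y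
  proof -
    have "(\<Sum>j<N. \<Sum>i<N. e i j * x ^ i * y ^ j) = (\<Sum>i<N. \<Sum>j<N. e i j * x ^ i * y ^ j)"
      by (rule sum.swap)
    also have "\<dots> = (\<Sum>i<N. (\<Sum>j<N. e i j * y ^ j) * x ^ i)"
      unfolding sum_distrib_right by (intro sum.cong refl) (simp add: mult_ac)
    finally show ?thesis .
  qed
  have "(\<Sum>j<N. c i j * y ^ j) = (\<Sum>j<N. d i j * y ^ j)" for y
    by (rule power_sum_coeffs_eq[OF _ assms(2)]) (use assms(1) in \<open>simp only: swap[symmetric]\<close>)
  thus ?thesis by (rule power_sum_coeffs_eq[OF _ assms(3)])
qed

lemma sum_lessThan_truncate:
  fixes f :: "nat \<Rightarrow> 'a::comm_monoid_add"
  assumes "\<And>n. M \<le> n \<Longrightarrow> f n = 0" "M \<le> N"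
  shows "(\<Sum>n<N. f n) = (\<Sum>n<M. f n)"
  by (rule sum.mono_neutral_right) (use assms in auto)

section \<open>Associative conformal algebras and their rank-one modules\<close>

lemma assoc_confD:
  assumes "assoc_conf C"
  shows "kspace C"
    "cder C (cadd C a b) = cadd C (cder C a) (cder C b)"
    "cder C (csmul C r a) = csmul C r (cder C a)"
    "cprod C n (cadd C a b) c = cadd C (cprod C n a c) (cprod C n b c)"
    "cprod C n a (cadd C b c) = cadd C (cprod C n a b) (cprod C n a c)"
    "cprod C n (csmul C r a) b = csmul C r (cprod C n a b)"
    "cprod C n a (csmul C r b) = csmul C r (cprod C n a b)"
    "\<exists>N. \<forall>n\<ge>N. cprod C n a b = czero C"
    "cprod C 0 (cder C a) b = czero C"
    "cprod C (Suc n) (cder C a) b = csmul C (- of_nat (Suc n)) (cprod C n a b)"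
    "cprod C 0 a (cder C b) = cder C (cprod C 0 a b)"
    "cprod C (Suc n) a (cder C b) =
       cadd C (cder C (cprod C (Suc n) a b)) (csmul C (of_nat (Suc n)) (cprod C n a b))"
    "cprod C n a (cprod C m b c) =
       csumn C (\<lambda>i. csmul C (of_nat (n choose i)) (cprod C (m + i) (cprod C (n - i) a b) c))
         (Suc n)"
  using assms unfolding assoc_conf_def by simp_all

lemma cprod_ge_loc_bound:
  assumes "assoc_conf C" "loc_bound C a b \<le> n"
  shows "cprod C n a b = czero C"
proof -
  have "\<forall>n\<ge>loc_bound C a b. cprod C n a b = czero C"
    unfolding loc_bound_def by (rule LeastI_ex) (rule assoc_confD(8)[OF assms(1)])
  thus ?thesis using assms(2) by blast
qed

lemma loc_bound_le: "\<forall>n\<ge>N. cprod C n a b = czero C \<Longrightarrow> loc_bound C a b \<le> N"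
  unfolding loc_bound_def by (rule Least_le)

lemma conf_moduleD:
  assumes "conf_module C act" "poly1 m"
  shows "poly2 (act a m)"
    "act (cadd C a b) m x l = act a m x l + act b m x l"
    "act (csmul C r a) m x l = r * act a m x l"
    "act a (\<lambda>y. r * m y) x l = r * act a m x l"
    "act (cder C a) m x l = - l * act a m x l"
    "act a (\<lambda>y. y * m y) x l = (x + l) * act a m x l"
  using assms(1) unfolding conf_module_def by (simp_all add: assms(2))

lemma conf_module_add_right:
  assumes "conf_module C act" "poly1 m" "poly1 m'"
  shows "act a (\<lambda>y. m y + m' y) x l = act a m x l + act a m' x l"
  using assms(1) unfolding conf_module_def by (simp add: assms(2,3))

lemma conf_module_assoc:
  assumes "conf_module C act" "poly1 m" "\<forall>n\<ge>N. cprod C n a b = czero C"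
  shows "act a (\<lambda>y. act b m y l2) x l1 =
    (\<Sum>n<N. l1 ^ n / fact n * act (cprod C n a b) m x (l1 + l2))"
  using assms(1) unfolding conf_module_def by (simp add: assms(2,3))
definition gen_act :: "('c \<Rightarrow> ('k::one \<Rightarrow> 'k) \<Rightarrow> 'k \<Rightarrow> 'k \<Rightarrow> 'k) \<Rightarrow> 'c \<Rightarrow> 'k \<Rightarrow> 'k \<Rightarrow> 'k" where
  "gen_act act a x l = act a (\<lambda>_. 1) x l"

lemma act_poly_eq:
  assumes "conf_module C act"
  shows "act a (poly p) x l = poly p (x + l) * gen_act act a x l"
proof (induction p)
  case 0
  have "act a (\<lambda>y. 0 * 1) x l = 0 * act a (\<lambda>_. 1) x l"
    by (rule conf_moduleD(4)[OF assms poly1_const])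
  thus ?case by simp
next
  case (pCons c p)
  have "poly (pCons c p) = (\<lambda>y. c * 1 + y * poly p y)" by (rule ext) simp
  moreover have "act a (\<lambda>y. c * 1 + y * poly p y) x l =
      act a (\<lambda>y. c * 1) x l + act a (\<lambda>y. y * poly p y) x l"
    by (rule conf_module_add_right[OF assms poly1_const poly1_mult[OF poly1_id poly1_poly]])
  moreover have "act a (\<lambda>y. c * 1) x l = c * gen_act act a x l"
    unfolding gen_act_def by (rule conf_moduleD(4)[OF assms poly1_const])
  moreover have "act a (\<lambda>y. y * poly p y) x l = (x + l) * act a (poly p) x l"
    by (rule conf_moduleD(6)[OF assms poly1_poly])
  ultimately show ?case using pCons.IH by (simp add: algebra_simps)
qed

lemma act_poly1_eq:
  assumes "conf_module C act" "poly1 m"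
  shows "act a m x l = m (x + l) * gen_act act a x l"
proof -
  obtain p where "m = poly p" using assms(2) unfolding poly1_def by blast
  thus ?thesis using act_poly_eq[OF assms(1)] by simp
qed

lemma gen_act_props:
  assumes "conf_module C act"
  shows "poly2 (gen_act act a)"
    "gen_act act (cadd C a b) x l = gen_act act a x l + gen_act act b x l"
    "gen_act act (csmul C r a) x l = r * gen_act act a x l"
    "gen_act act (cder C a) x l = - l * gen_act act a x l"
  unfolding gen_act_def using conf_moduleD(1-3,5)[OF assms poly1_const] by blast+

lemma gen_act_assoc:
  assumes "conf_module C act" "\<forall>n\<ge>N. cprod C n a b = czero C"
  shows "gen_act act b (x + l1) l2 * gen_act act a x l1 =
    (\<Sum>n<N. l1 ^ n / fact n * gen_act act (cprod C n a b) x (l1 + l2))"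
  using conf_module_assoc[OF assms(1) poly1_const assms(2)]
    act_poly1_eq[OF assms(1) poly2_fix_snd[OF conf_moduleD(1)[OF assms(1) poly1_const]]]
  by (simp add: gen_act_def)

section \<open>Cochains and their reductions\<close>

lemma cochain1D:
  assumes "cochain1 C \<phi>"
  shows "poly2 (\<phi> a)"
    "\<phi> (cadd C a b) x l = \<phi> a x l + \<phi> b x l"
    "\<phi> (csmul C r a) x l = r * \<phi> a x l"
    "\<phi> (cder C a) x l = - l * \<phi> a x l"
  using assms unfolding cochain1_def by simp_all

lemma cochain1_add_scaled:
  assumes "cochain1 C \<phi>" "cochain1 C \<psi>"
  shows "cochain1 C (\<lambda>a x l. \<phi> a x l + c * \<psi> a x l)"
  unfolding cochain1_def
proof (intro conjI allI)
  show "poly2 (\<lambda>x l. \<phi> a x l + c * \<psi> a x l)" for a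
    by (intro poly2_add poly2_mult poly2_const cochain1D(1)[OF assms(1)] cochain1D(1)[OF assms(2)])
qed (simp_all add: cochain1D[OF assms(1)] cochain1D[OF assms(2)] algebra_simps)

text \<open>Writing \<open>g a t = \<phi> a (- t) t\<close> for a 1-cochain \<open>\<phi>\<close>, the cocycle condition evaluated at
  \<open>\<partial> = - \<lambda>\<^sub>1 - \<lambda>\<^sub>2\<close>, where the coboundary term \<open>(\<partial> + \<lambda>\<^sub>1 + \<lambda>\<^sub>2) \<chi>\<close> vanishes,
  becomes the last clause below.\<close>
definition reduced_cocycle ::
  "('k::field_char_0, 'c) conf_alg \<Rightarrow> ('c \<Rightarrow> ('k \<Rightarrow> 'k) \<Rightarrow> 'k \<Rightarrow> 'k \<Rightarrow> 'k) \<Rightarrow>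
   ('c \<Rightarrow> 'k \<Rightarrow> 'k) \<Rightarrow> bool" where
  "reduced_cocycle C act g \<longleftrightarrow>
     (\<forall>a b t. g (cadd C a b) t = g a t + g b t) \<and>
     (\<forall>r a t. g (csmul C r a) t = r * g a t) \<and>
     (\<forall>a t. g (cder C a) t = - t * g a t) \<and>
     (\<forall>a b l1 l2. g b l2 * gen_act act a (- l1 - l2) l1 =
        (\<Sum>n<loc_bound C a b. l1 ^ n / fact n * g (cprod C n a b) (l1 + l2)))"

lemma reduced_cocycleD:
  assumes "reduced_cocycle C act g"
  shows "g (cadd C a b) t = g a t + g b t"
    "g (csmul C r a) t = r * g a t"
    "g (cder C a) t = - t * g a t"
    "g b l2 * gen_act act a (- l1 - l2) l1 =
       (\<Sum>n<loc_bound C a b. l1 ^ n / fact n * g (cprod C n a b) (l1 + l2))"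
  using assms unfolding reduced_cocycle_def by blast+

lemma reduced_cocycle_zero:
  assumes "kspace C" "reduced_cocycle C act g"
  shows "g (czero C) t = 0"
  using additive_map_zero[OF assms(1), of "\<lambda>a. g a t"] reduced_cocycleD(1)[OF assms(2)] by blast

lemma reduced_cocycle_neg:
  assumes "kspace C" "reduced_cocycle C act g"
  shows "g (cneg C a) t = - g a t"
  using reduced_cocycleD(1)[OF assms(2), of "cneg C a" a t]
  by (simp add: kspaceD(4)[OF assms(1)] reduced_cocycle_zero[OF assms] eq_neg_iff_add_eq_0)

lemma reduced_cocycle_add_scaled:
  assumes "reduced_cocycle C act g" "reduced_cocycle C act h"
  shows "reduced_cocycle C act (\<lambda>a t. g a t + c * h a t)"
  using reduced_cocycleD[OF assms(1)] reduced_cocycleD[OF assms(2)]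
  unfolding reduced_cocycle_def
  by (simp add: algebra_simps sum.distrib sum_distrib_left)

text \<open>The set where \<open>g\<close> vanishes is closed under all operations; for \<open>a\<^sub>(\<^sub>n\<^sub>) b\<close>, compare
  coefficients of \<open>\<lambda>\<^sub>1\<close> in the last clause of \<open>reduced_cocycle\<close> with \<open>\<lambda>\<^sub>1 + \<lambda>\<^sub>2\<close> fixed.\<close>
lemma reduced_cocycle_eq_zero_if_gen:
  assumes ac: "assoc_conf C" and gen: "conf_generates C v"
    and g: "reduced_cocycle C act g" and gv: "\<And>t. g v t = 0"
  shows "g a t = 0"
proof -
  let ?S = "{b. \<forall>t. g b t = 0}"
  have zero: "g (czero C) t = 0" for t
    by (rule reduced_cocycle_zero[OF assoc_confD(1)[OF ac] g])
  have prod: "cprod C n a b \<in> ?S" if "b \<in> ?S" for n a b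
  proof (cases "loc_bound C a b \<le> n")
    case True
    thus ?thesis using cprod_ge_loc_bound[OF ac True] zero by simp
  next
    case False
    have "g (cprod C n a b) \<mu> / fact n = 0" for \<mu>
    proof (rule power_sum_coeffs_zero[of _ "loc_bound C a b"])
      show "(\<Sum>k<loc_bound C a b. g (cprod C k a b) \<mu> / fact k * l1 ^ k) = 0" for l1
        using reduced_cocycleD(4)[OF g, of b "\<mu> - l1" a l1] that by (simp add: mult_ac)
    qed (use False in simp)
    thus ?thesis by simp
  qed
  have "?S = UNIV"
    using gen unfolding conf_generates_def
  proof (elim allE impE)
    show "v \<in> ?S \<and> czero C \<in> ?S \<and> (\<forall>a\<in>?S. \<forall>b\<in>?S. cadd C a b \<in> ?S) \<and>
        (\<forall>r. \<forall>a\<in>?S. csmul C r a \<in> ?S) \<and> (\<forall>a\<in>?S. cder C a \<in> ?S) \<and>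
        (\<forall>n. \<forall>a\<in>?S. \<forall>b\<in>?S. cprod C n a b \<in> ?S)"
      using gv zero prod reduced_cocycleD(1-3)[OF g] by auto
  qed
  thus ?thesis by auto
qed

lemma Z1_reduced_cocycle:
  assumes cm: "conf_module C act" and "\<phi> \<in> Z1 C act"
  shows "reduced_cocycle C act (\<lambda>a t. \<phi> a (- t) t)"
proof -
  have c1: "cochain1 C \<phi>" using assms(2) unfolding Z1_def by blast
  obtain \<chi> where \<chi>: "\<And>a b x l1 l2. hd1 C act \<phi> a b x l1 l2 = (x + l1 + l2) * \<chi> a b x l1 l2"
    using assms(2) unfolding Z1_def by blast
  have "\<phi> b (- l2) l2 * gen_act act a (- l1 - l2) l1 =
     (\<Sum>n<loc_bound C a b. l1 ^ n / fact n * \<phi> (cprod C n a b) (- (l1 + l2)) (l1 + l2))"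
    for a b l1 l2
  proof -
    have "hd1 C act \<phi> a b (- l1 - l2) l1 l2 = 0" using \<chi>[of a b "- l1 - l2" l1 l2] by simp
    moreover have "act a (\<lambda>y. \<phi> b y l2) (- l1 - l2) l1 =
        \<phi> b (- l2) l2 * gen_act act a (- l1 - l2) l1"
      by (simp add: act_poly1_eq[OF cm poly2_fix_snd[OF cochain1D(1)[OF c1]]])
    ultimately show ?thesis unfolding hd1_def by (simp add: minus_add_distrib)
  qed
  thus ?thesis using cochain1D(2-4)[OF c1] unfolding reduced_cocycle_def by simp
qed

lemma reduced_cocycle_gen_act:
  assumes cm: "conf_module C act" and ac: "assoc_conf C"
  shows "reduced_cocycle C act (\<lambda>a t. gen_act act a (- t) t)"
proof -
  have "gen_act act b (- l2) l2 * gen_act act a (- l1 - l2) l1 =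
      (\<Sum>n<loc_bound C a b. l1 ^ n / fact n * gen_act act (cprod C n a b) (- t) t)"
    if "t = l1 + l2" for a b l1 l2 t
    using gen_act_assoc[OF cm, of "loc_bound C a b" a b "- l1 - l2" l1 l2]
      cprod_ge_loc_bound[OF ac] that
    by (simp add: minus_add_distrib)
  thus ?thesis unfolding reduced_cocycle_def using gen_act_props(2-4)[OF cm] by simp
qed

lemma poly2_diff_antidiagonal_divisible:
  fixes Q :: "'k::field_char_0 \<Rightarrow> 'k \<Rightarrow> 'k"
  assumes "poly2 Q"
  shows "\<exists>D. poly3 D \<and> (\<forall>x l1 l2. Q x l1 - Q (- l1 - l2) l1 = (x + l1 + l2) * D x l1 l2)"
proof -
  obtain c d where cd: "\<And>x l. Q x l = (\<Sum>i<d. \<Sum>j<d. c i j * x ^ i * l ^ j)"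
    using poly2_double_sum[OF assms] by blast
  define S where "S i x l1 l2 = (\<Sum>k<i. (- l1 - l2) ^ (i - Suc k) * x ^ k)" for i and x l1 l2 :: 'k
  define D where "D x l1 l2 = (\<Sum>i<d. \<Sum>j<d. c i j * S i x l1 l2 * l1 ^ j)" for x l1 l2 :: 'k
  have "poly3 D" unfolding D_def S_def by (intro poly3_intros)
  moreover have "Q x l1 - Q (- l1 - l2) l1 = (x + l1 + l2) * D x l1 l2" for x l1 l2
  proof -
    have pow: "x ^ i - (- l1 - l2) ^ i = (x + l1 + l2) * S i x l1 l2" for i
      using power_diff_sumr2[of x i "- l1 - l2"] by (simp add: algebra_simps S_def)
    have "Q x l1 - Q (- l1 - l2) l1 =
        (\<Sum>i<d. \<Sum>j<d. c i j * (x ^ i - (- l1 - l2) ^ i) * l1 ^ j)"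
      unfolding cd by (simp add: sum_subtractf[symmetric] left_diff_distrib right_diff_distrib)
    also have "\<dots> = (x + l1 + l2) * D x l1 l2"
      unfolding pow D_def by (simp add: sum_distrib_left mult_ac)
    finally show ?thesis .
  qed
  ultimately show ?thesis by blast
qed

lemma poly2_divisible_if_vanishes_on_antidiagonal:
  fixes g :: "'k::field_char_0 \<Rightarrow> 'k \<Rightarrow> 'k"
  assumes "poly2 g" "\<And>l. g (- l) l = 0"
  shows "\<exists>h. poly2 h \<and> (\<forall>x l. g x l = (x + l) * h x l)"
proof -
  obtain D where D: "poly3 D" "\<And>x l1 l2. g x l1 - g (- l1 - l2) l1 = (x + l1 + l2) * D x l1 l2"
    using poly2_diff_antidiagonal_divisible[OF assms(1)] by blast
  obtain p where p: "\<And>x l1 l2. D x l1 l2 = poly (poly (poly p [:[:l2:]:]) [:l1:]) x"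
    using D(1) unfolding poly3_def by blast
  have "poly2 (\<lambda>x l. D x l 0)"
    unfolding poly2_def by (rule exI[of _ "poly p 0"]) (simp add: p)
  moreover have "g x l = (x + l) * D x l 0" for x l
    using D(2)[of x l 0] assms(2)[of l] by simp
  ultimately show ?thesis by blast
qed

lemma cochain1_of_quotient:
  fixes g :: "'c \<Rightarrow> 'k::field_char_0 \<Rightarrow> 'k \<Rightarrow> 'k"
  assumes "\<And>a. poly2 (\<psi> a)" "\<And>a x l. g a x l = (x + l) * \<psi> a x l"
    and "\<And>a b x l. g (cadd C a b) x l = g a x l + g b x l"
    and "\<And>r a x l. g (csmul C r a) x l = r * g a x l"
    and "\<And>a x l. g (cder C a) x l = - l * g a x l"
  shows "cochain1 C \<psi>"
proof -
  have p: "poly1 (\<lambda>x. \<psi> a x l)" for a l by (rule poly2_fix_snd[OF assms(1)])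
  have p': "poly1 (\<lambda>x. r * \<psi> a x l)" for r a l by (rule poly1_mult[OF poly1_const p])
  show ?thesis
    unfolding cochain1_def
  proof (intro conjI allI)
    show "\<psi> (cadd C a b) x l = \<psi> a x l + \<psi> b x l" for a b x l
      by (rule poly1_mult_linear_cancel[where c = l, OF p poly1_add[OF p p]])
        (simp add: assms(2,3)[symmetric] distrib_left)
    show "\<psi> (csmul C r a) x l = r * \<psi> a x l" for r a x l
      by (rule poly1_mult_linear_cancel[where c = l, OF p p'])
        (simp add: assms(2,4)[symmetric] mult.left_commute)
    show "\<psi> (cder C a) x l = - l * \<psi> a x l" for a x l
      by (rule poly1_mult_linear_cancel[where c = l, OF p p'])
        (simp add: assms(2)[symmetric] assms(5) mult.left_commute)
  qed (rule assms(1))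
qed

lemma B1_if_reduction_eq:
  assumes cm: "conf_module C act" and c1: "cochain1 C \<phi>" and m: "poly1 m"
    and red: "\<And>a t. \<phi> a (- t) t = act a m (- t) t"
  shows "\<phi> \<in> B1 C act"
proof -
  define g where "g a x l = \<phi> a x l - act a m x l" for a x l
  have "\<exists>h. poly2 h \<and> (\<forall>x l. g a x l = (x + l) * h x l)" for a
    by (rule poly2_divisible_if_vanishes_on_antidiagonal)
      (simp_all add: g_def red poly2_diff cochain1D(1)[OF c1] conf_moduleD(1)[OF cm m])
  then obtain \<psi> where \<psi>: "\<And>a. poly2 (\<psi> a)" "\<And>a x l. g a x l = (x + l) * \<psi> a x l"
    by metis
  have "cochain1 C \<psi>"
    by (rule cochain1_of_quotient[OF \<psi>])
      (simp_all add: g_def cochain1D[OF c1] conf_moduleD[OF cm m] algebra_simps)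
  moreover have "\<phi> a x l = hd0 act m a x l + (x + l) * \<psi> a x l" for a x l
    using \<psi>(2)[of a x l] unfolding g_def hd0_def by (simp add: algebra_simps)
  ultimately show ?thesis unfolding B1_def using m by blast
qed

lemma B1_reduction:
  assumes cm: "conf_module C act" and "\<phi> \<in> B1 C act"
  obtains c where "\<And>a t. \<phi> a (- t) t = c * gen_act act a (- t) t"
proof -
  obtain m \<psi> where m: "poly1 m" and \<phi>: "\<And>a x l. \<phi> a x l = hd0 act m a x l + (x + l) * \<psi> a x l"
    using assms(2) unfolding B1_def by blast
  have "\<phi> a (- t) t = m 0 * gen_act act a (- t) t" for a t
    by (simp add: \<phi> hd0_def act_poly1_eq[OF cm m])
  thus thesis by (rule that)
qed

lemma cochain2_add_scaled:
  assumes "cochain2 C \<chi>" "cochain2 C \<chi>'"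
  shows "cochain2 C (\<lambda>a b x l1 l2. \<chi> a b x l1 l2 + c * \<chi>' a b x l1 l2)"
  using assms unfolding cochain2_def
  by (auto intro!: poly3_add poly3_mult poly3_const simp: algebra_simps)

lemma Z1_add_scaled:
  assumes cm: "conf_module C act" and "\<phi> \<in> Z1 C act" "\<psi> \<in> Z1 C act"
  shows "(\<lambda>a x l. \<phi> a x l + c * \<psi> a x l) \<in> Z1 C act"
proof -
  obtain \<chi> \<chi>' where c1: "cochain1 C \<phi>" "cochain1 C \<psi>" and c2: "cochain2 C \<chi>" "cochain2 C \<chi>'"
    and \<chi>: "\<And>a b x l1 l2. hd1 C act \<phi> a b x l1 l2 = (x + l1 + l2) * \<chi> a b x l1 l2"
    and \<chi>': "\<And>a b x l1 l2. hd1 C act \<psi> a b x l1 l2 = (x + l1 + l2) * \<chi>' a b x l1 l2"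
    using assms(2,3) unfolding Z1_def by blast
  have "hd1 C act (\<lambda>a x l. \<phi> a x l + c * \<psi> a x l) a b x l1 l2 =
      hd1 C act \<phi> a b x l1 l2 + c * hd1 C act \<psi> a b x l1 l2" for a b x l1 l2
  proof -
    have p: "poly1 (\<lambda>y. \<phi> b y l2)" "poly1 (\<lambda>y. c * \<psi> b y l2)"
      by (intro poly2_fix_snd poly1_mult poly1_const cochain1D(1)[OF c1(1)] cochain1D(1)[OF c1(2)])+
    show ?thesis
      unfolding hd1_def conf_module_add_right[OF cm p]
        conf_moduleD(4)[OF cm poly2_fix_snd[OF cochain1D(1)[OF c1(2)]]]
      by (simp add: algebra_simps sum.distrib sum_distrib_left)
  qed
  hence "hd1 C act (\<lambda>a x l. \<phi> a x l + c * \<psi> a x l) a b x l1 l2 =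
      (x + l1 + l2) * (\<chi> a b x l1 l2 + c * \<chi>' a b x l1 l2)" for a b x l1 l2
    by (simp add: \<chi> \<chi>' algebra_simps)
  thus ?thesis
    unfolding Z1_def using cochain1_add_scaled[OF c1] cochain2_add_scaled[OF c2] by blast
qed

lemma Z1_B1_if_gen_proportional:
  assumes ac: "assoc_conf C" and gen: "conf_generates C v" and cm: "conf_module C act"
    and Z: "\<phi> \<in> Z1 C act" and v: "\<And>t. \<phi> v (- t) t = c * gen_act act v (- t) t"
  shows "\<phi> \<in> B1 C act"
proof (rule B1_if_reduction_eq[OF cm _ poly1_const])
  show "cochain1 C \<phi>" using Z unfolding Z1_def by blast
  have "reduced_cocycle C act (\<lambda>a t. \<phi> a (- t) t + (- c) * gen_act act a (- t) t)"
    by (rule reduced_cocycle_add_scaled[OF Z1_reduced_cocycle[OF cm Z] reduced_cocycle_gen_act[OF cm ac]])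
  from reduced_cocycle_eq_zero_if_gen[OF ac gen this]
  have "\<phi> a (- t) t = c * gen_act act a (- t) t" for a t
    using v by simp
  thus "\<phi> a (- t) t = act a (\<lambda>_. c) (- t) t" for a t
    by (simp add: act_poly1_eq[OF cm poly1_const])
qed

section \<open>Reduced cocycles on the generator of \<open>U(3)\<close>\<close>

lemma reduced_cocycle_gen_quadratic:
  assumes ac: "assoc_conf C" and v3: "\<forall>n\<ge>3. cprod C n v v = czero C"
    and g: "reduced_cocycle C act g" and Qv: "\<And>x l. gen_act act v x l = \<alpha> + x + \<Delta> * l"
  shows "g v (- s) * (\<alpha> + \<Delta> * s) =
    g (cprod C 0 v v) 0 + g (cprod C 1 v v) 0 * s + g (cprod C 2 v v) 0 / 2 * s\<^sup>2"
proof -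
  have zero: "g (czero C) t = 0" for t
    by (rule reduced_cocycle_zero[OF assoc_confD(1)[OF ac] g])
  have "g v (- s) * gen_act act v (- s - - s) s =
      (\<Sum>n<loc_bound C v v. s ^ n / fact n * g (cprod C n v v) (s + - s))"
    by (rule reduced_cocycleD(4)[OF g])
  also have "\<dots> = (\<Sum>n<loc_bound C v v. s ^ n / fact n * g (cprod C n v v) 0)"
    by simp
  also have "\<dots> = (\<Sum>n<3. s ^ n / fact n * g (cprod C n v v) 0)"
    by (rule sum_lessThan_truncate[symmetric])
      (use cprod_ge_loc_bound[OF ac] zero loc_bound_le[OF v3] in auto)
  also have "\<dots> = g (cprod C 0 v v) 0 + g (cprod C 1 v v) 0 * s + g (cprod C 2 v v) 0 / 2 * s\<^sup>2"
    by (simp add: eval_nat_numeral power2_eq_square)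
  finally show ?thesis by (simp add: Qv)
qed

lemma poly1_linear_if_product_quadratic:
  fixes f :: "'k::field_char_0 \<Rightarrow> 'k"
  assumes "poly1 f" "\<Delta> \<noteq> 0" "\<And>s. f s * (\<alpha> + \<Delta> * s) = c0 + c1 * s + c2 * s\<^sup>2"
  shows "\<exists>q0 q1. \<forall>s. f s = q0 + q1 * s"
proof -
  obtain p where p: "\<And>s. f s = poly p s" using assms(1) unfolding poly1_def by blast
  have "poly ([:\<alpha>, \<Delta>:] * p) = poly [:c0, c1, c2:]"
  proof
    show "poly ([:\<alpha>, \<Delta>:] * p) s = poly [:c0, c1, c2:] s" for s
      using assms(3)[of s] by (simp add: p algebra_simps power2_eq_square)
  qed
  hence eq: "[:\<alpha>, \<Delta>:] * p = [:c0, c1, c2:]" by (simp only: poly_eq_poly_eq_iff)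
  have "degree p < 2"
  proof (cases "p = 0")
    case False
    hence "degree ([:\<alpha>, \<Delta>:] * p) = degree [:\<alpha>, \<Delta>:] + degree p"
      using assms(2) by (intro degree_mult_eq) auto
    hence "degree ([:\<alpha>, \<Delta>:] * p) = 1 + degree p" using assms(2) by simp
    moreover have "degree [:c0, c1, c2:] \<le> 2" by (simp add: degree_pCons_le)
    ultimately show ?thesis using eq by simp
  qed simp
  hence "f s = coeff p 0 + coeff p 1 * s" for s
    by (simp add: p poly_altdef_lessThan eval_nat_numeral mult.commute)
  thus ?thesis by blast
qed

text \<open>The relation \<open>2 v\<^sub>(\<^sub>1\<^sub>) v - \<partial>(v\<^sub>(\<^sub>2\<^sub>) v) = 2 v\<close> identifies the linear coefficient of the
  quadratic identity above with \<open>g v 0\<close>.\<close>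
lemma reduced_cocycle_gen_linear:
  fixes \<alpha> \<Delta> :: "'k::field_char_0"
  assumes ac: "assoc_conf C" and rels: "U3_rels C v"
    and Qv: "\<And>x l. gen_act act v x l = \<alpha> + x + \<Delta> * l" and "\<Delta> \<noteq> 0"
    and g: "reduced_cocycle C act g" and "poly1 (g v)"
  shows "\<exists>p0 p1. (\<forall>t. g v t = p0 + p1 * t) \<and> p0 * (1 - \<Delta>) + p1 * \<alpha> = 0"
proof -
  have ks: "kspace C" by (rule assoc_confD(1)[OF ac])
  have v3: "\<forall>n\<ge>3. cprod C n v v = czero C"
    and rel: "cadd C (csmul C 2 (cprod C 1 v v)) (cneg C (cder C (cprod C 2 v v))) = csmul C 2 v"
    using rels unfolding U3_rels_def by blast+
  define A where "A = g (cprod C 0 v v) 0"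
  define B where "B = g (cprod C 1 v v) 0"
  define A2 where "A2 = g (cprod C 2 v v) 0 / 2"
  have quad: "g v (- s) * (\<alpha> + \<Delta> * s) = A + B * s + A2 * s\<^sup>2" for s
    unfolding A_def B_def A2_def by (rule reduced_cocycle_gen_quadratic[OF ac v3 g Qv])
  have "poly1 (\<lambda>s. g v (- s))" using \<open>poly1 (g v)\<close> by (rule poly1_comp_neg)
  then obtain q0 q1 where q: "\<And>s. g v (- s) = q0 + q1 * s"
    using poly1_linear_if_product_quadratic[OF _ \<open>\<Delta> \<noteq> 0\<close> quad] by blast
  have lin: "(q0 + q1 * s) * (\<alpha> + \<Delta> * s) = A + B * s + A2 * s\<^sup>2" for s
    using quad[of s] by (simp add: q)
  have "(q0 + q1) * (\<alpha> + \<Delta>) = A + B + A2" "(q0 - q1) * (\<alpha> - \<Delta>) = A - B + A2"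
    using lin[of 1] lin[of "- 1"] by simp_all
  hence "2 * B = 2 * (q0 * \<Delta> + q1 * \<alpha>)" by algebra
  hence "B = q0 * \<Delta> + q1 * \<alpha>" by (simp only: mult_cancel_left) simp
  moreover have "2 * B = 2 * q0"
    using arg_cong[OF rel, of "\<lambda>a. g a 0"] q[of 0]
    by (simp add: B_def reduced_cocycleD(1-3)[OF g] reduced_cocycle_neg[OF ks g])
  hence "B = q0" by (simp only: mult_cancel_left) simp
  ultimately have "q0 * (1 - \<Delta>) + (- q1) * \<alpha> = 0" by algebra
  moreover have "g v t = q0 + (- q1) * t" for t using q[of "- t"] by simp
  ultimately show ?thesis by blast
qed

lemma proportional_if_cross_product_zero:
  fixes a b p q :: "'k::field"
  assumes "p * b = q * a" "a \<noteq> 0 \<or> b \<noteq> 0"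
  shows "\<exists>c. p = c * a \<and> q = c * b"
proof (cases "a = 0")
  case True
  thus ?thesis using assms by (intro exI[of _ "q / b"]) auto
next
  case False
  thus ?thesis using assms(1) by (intro exI[of _ "p / a"]) (auto simp: field_simps)
qed

lemma H1_dim_generic:
  fixes C :: "('k::field_char_0, 'c) conf_alg"
  assumes U: "is_U3 C v" and cm: "conf_module C act"
    and Qv: "\<And>x l. gen_act act v x l = \<alpha> + x + \<Delta> * l"
    and "\<Delta> \<noteq> 0" and "\<not> (\<Delta> = 1 \<and> \<alpha> = 0)"
  shows "H1_dim_eq C act 0"
proof -
  have ac: "assoc_conf C" and rels: "U3_rels C v" and gen: "conf_generates C v"
    using U unfolding is_U3_def by blast+
  have "\<phi> \<in> B1 C act" if Z: "\<phi> \<in> Z1 C act" for \<phi>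
  proof -
    have c1: "cochain1 C \<phi>" using Z unfolding Z1_def by blast
    note rc = Z1_reduced_cocycle[OF cm Z]
    obtain p0 p1 where p: "\<And>t. \<phi> v (- t) t = p0 + p1 * t" and "p0 * (1 - \<Delta>) + p1 * \<alpha> = 0"
      using reduced_cocycle_gen_linear[OF ac rels Qv \<open>\<Delta> \<noteq> 0\<close> rc
          poly2_antidiagonal[OF cochain1D(1)[OF c1]]] by blast
    hence "p0 * (\<Delta> - 1) = p1 * \<alpha>" by (simp add: algebra_simps)
    then obtain c where c: "p0 = c * \<alpha>" "p1 = c * (\<Delta> - 1)"
      using proportional_if_cross_product_zero[of p0 "\<Delta> - 1" p1 \<alpha>] assms(5) by auto
    have "\<phi> v (- t) t = c * gen_act act v (- t) t" for t
      unfolding p c Qv by (simp add: algebra_simps)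
    thus ?thesis by (rule Z1_B1_if_gen_proportional[OF ac gen cm Z])
  qed
  thus ?thesis unfolding H1_dim_eq_def quot_dim_eq_def by (intro exI[of _ "{}"]) simp
qed

section \<open>The \<open>n\<close>-products of a module on \<open>\<Bbbk>[\<partial>]\<close>\<close>

lemma coeff_poly_pCons_const:
  "coeff (poly R [:l:]) i = poly (map_poly (\<lambda>q. coeff q i) R) l"
  by (induction R) (simp_all add: map_poly_pCons)

lemma poly_poly_const_eqI:
  fixes P P' :: "'k::field_char_0 poly poly"
  assumes "\<And>x l. poly (poly P [:l:]) x = poly (poly P' [:l:]) x"
  shows "P = P'"
proof -
  define R where "R = P - P'"
  have R0: "poly R [:l:] = 0" for l
  proof -
    have "poly (poly R [:l:]) x = 0" for x using assms by (simp add: R_def)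
    thus ?thesis using poly_all_0_iff_0 by blast
  qed
  have "coeff (coeff R j) i = 0" for i j
  proof -
    have "poly (map_poly (\<lambda>q. coeff q i) R) l = 0" for l
      using R0[of l] coeff_poly_pCons_const[of R l i] by simp
    hence "map_poly (\<lambda>q. coeff q i) R = 0" using poly_all_0_iff_0 by blast
    thus ?thesis by (metis coeff_0 coeff_map_poly)
  qed
  hence "R = 0" by (intro poly_eqI) (simp add: poly_eq_iff)
  thus ?thesis by (simp add: R_def)
qed

text \<open>\<open>a\<^sub>\<lambda> p = \<Sum>\<^sub>n \<lambda>\<^sup>n / n! a\<^sub>(\<^sub>n\<^sub>) p\<close>; the \<open>n\<close>-products \<open>a\<^sub>(\<^sub>n\<^sub>) p \<in> \<Bbbk>[\<partial>]\<close> are read off from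
  the coefficients in \<open>\<lambda>\<close> of the polynomial representing \<open>a\<^sub>\<lambda> p\<close>.\<close>
definition act_coeffs ::
  "('c \<Rightarrow> ('k::field_char_0 \<Rightarrow> 'k) \<Rightarrow> 'k \<Rightarrow> 'k \<Rightarrow> 'k) \<Rightarrow> 'c \<Rightarrow> 'k poly \<Rightarrow> 'k poly poly" where
  "act_coeffs act a p = (SOME P. \<forall>x l. act a (poly p) x l = poly (poly P [:l:]) x)"

definition mod_nprod ::
  "('c \<Rightarrow> ('k::field_char_0 \<Rightarrow> 'k) \<Rightarrow> 'k \<Rightarrow> 'k \<Rightarrow> 'k) \<Rightarrow> nat \<Rightarrow> 'c \<Rightarrow> 'k poly \<Rightarrow> 'k poly" where
  "mod_nprod act n a p = smult (fact n) (coeff (act_coeffs act a p) n)"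

definition mod_loc_bound ::
  "('c \<Rightarrow> ('k::field_char_0 \<Rightarrow> 'k) \<Rightarrow> 'k \<Rightarrow> 'k \<Rightarrow> 'k) \<Rightarrow> 'c \<Rightarrow> 'k poly \<Rightarrow> nat" where
  "mod_loc_bound act a p = Suc (degree (act_coeffs act a p))"

lemma mod_nprod_ge_loc_bound: "mod_loc_bound act a p \<le> n \<Longrightarrow> mod_nprod act n a p = 0"
  by (simp add: mod_nprod_def mod_loc_bound_def coeff_eq_0)

lemma exp_series_add:
  fixes f g :: "nat \<Rightarrow> 'k::field_char_0"
  shows "(\<Sum>k<N. l ^ k / fact k * f k) + (\<Sum>k<N. l ^ k / fact k * g k) =
    (\<Sum>k<N. l ^ k / fact k * (f k + g k))"
  by (simp add: sum.distrib[symmetric] distrib_left)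

lemma exp_series_scale:
  fixes f :: "nat \<Rightarrow> 'k::field_char_0"
  shows "r * (\<Sum>k<N. l ^ k / fact k * f k) = (\<Sum>k<N. l ^ k / fact k * (r * f k))"
  by (simp add: sum_distrib_left mult.left_commute)

lemma exp_series_times_var:
  fixes f :: "nat \<Rightarrow> 'k::field_char_0"
  shows "l * (\<Sum>k<N. l ^ k / fact k * f k) =
    (\<Sum>j<Suc N. l ^ j / fact j * (case j of 0 \<Rightarrow> 0 | Suc k \<Rightarrow> of_nat j * f k))"
proof -
  have "l ^ Suc k / fact (Suc k) * (of_nat (Suc k) * f k) = l * (l ^ k / fact k * f k)" for k
    by (simp add: field_simps del: of_nat_Suc)
  hence "l * (\<Sum>k<N. l ^ k / fact k * f k) =
      (\<Sum>k<N. l ^ Suc k / fact (Suc k) * (of_nat (Suc k) * f k))"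
    by (simp add: sum_distrib_left del: of_nat_Suc)
  also have "\<dots> = (\<Sum>j<Suc N. l ^ j / fact j * (case j of 0 \<Rightarrow> 0 | Suc k \<Rightarrow> of_nat j * f k))"
    by (subst sum.lessThan_Suc_shift) simp
  finally show ?thesis .
qed

context
  fixes C :: "('k::field_char_0, 'c) conf_alg" and act
  assumes cm: "conf_module C act"
begin

lemma act_coeffs_spec: "act a (poly p) x l = poly (poly (act_coeffs act a p) [:l:]) x"
proof -
  have "\<exists>P. \<forall>x l. act a (poly p) x l = poly (poly P [:l:]) x"
    using conf_moduleD(1)[OF cm poly1_poly] unfolding poly2_def by blast
  thus ?thesis unfolding act_coeffs_def by (rule someI2_ex) blast
qed

lemma mod_nprod_unique:
  assumes "\<And>x l. act a (poly p) x l = (\<Sum>n<N. l ^ n / fact n * poly (q n) x)"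
  shows "mod_nprod act n a p = (if n < N then q n else 0)"
proof -
  define P where "P = (\<Sum>n<N. monom (smult (1 / fact n) (q n)) n)"
  have "poly (poly P [:l:]) x = (\<Sum>n<N. l ^ n / fact n * poly (q n) x)" for x l
    by (simp add: P_def poly_sum poly_monom poly_power mult_ac)
  hence "act_coeffs act a p = P" using act_coeffs_spec assms by (intro poly_poly_const_eqI) simp
  thus ?thesis by (simp add: mod_nprod_def P_def coeff_sum)
qed

lemma mod_nprod_expansion:
  assumes "mod_loc_bound act a p \<le> N"
  shows "act a (poly p) x l = (\<Sum>n<N. l ^ n / fact n * poly (mod_nprod act n a p) x)"
proof -
  have "degree (act_coeffs act a p) < N" using assms by (simp add: mod_loc_bound_def)
  from poly_altdef_lessThan[OF this, of "[:l:]"] show ?thesis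
    by (simp add: act_coeffs_spec poly_sum poly_power mod_nprod_def mult_ac)
qed

lemma mod_nprod_expansion_if_vanishing:
  assumes "\<And>n. K \<le> n \<Longrightarrow> mod_nprod act n a p = 0"
  shows "act a (poly p) x l = (\<Sum>n<K. l ^ n / fact n * poly (mod_nprod act n a p) x)"
proof -
  let ?f = "\<lambda>n. l ^ n / fact n * poly (mod_nprod act n a p) x"
  have "act a (poly p) x l = (\<Sum>n<K + mod_loc_bound act a p. ?f n)"
    by (rule mod_nprod_expansion) simp
  also have "\<dots> = (\<Sum>n<K. ?f n)"
    by (rule sum_lessThan_truncate) (simp_all add: assms)
  finally show ?thesis .
qed

lemma mod_nprod_add_left: "mod_nprod act n (cadd C a a') p = mod_nprod act n a p + mod_nprod act n a' p"
  and mod_nprod_smult_left: "mod_nprod act n (csmul C r a) p = smult r (mod_nprod act n a p)"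
proof -
  define N where "N = mod_loc_bound act a p + mod_loc_bound act a' p + Suc n"
  have N: "mod_loc_bound act a p \<le> N" "mod_loc_bound act a' p \<le> N" "n < N"
    by (simp_all add: N_def)
  have "act (cadd C a a') (poly p) x l =
      (\<Sum>k<N. l ^ k / fact k * poly (mod_nprod act k a p + mod_nprod act k a' p) x)" for x l
    by (simp only: conf_moduleD(2)[OF cm poly1_poly] mod_nprod_expansion[OF N(1)]
        mod_nprod_expansion[OF N(2)] exp_series_add poly_add)
  from mod_nprod_unique[OF this] show "mod_nprod act n (cadd C a a') p =
      mod_nprod act n a p + mod_nprod act n a' p" using N(3) by simp
  have "act (csmul C r a) (poly p) x l =
      (\<Sum>k<N. l ^ k / fact k * poly (smult r (mod_nprod act k a p)) x)" for x l
    by (simp only: conf_moduleD(3)[OF cm poly1_poly] mod_nprod_expansion[OF N(1)]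
        exp_series_scale poly_smult)
  from mod_nprod_unique[OF this] show "mod_nprod act n (csmul C r a) p =
      smult r (mod_nprod act n a p)" using N(3) by simp
qed

lemma mod_nprod_add_right: "mod_nprod act n a (p + p') = mod_nprod act n a p + mod_nprod act n a p'"
  and mod_nprod_smult_right: "mod_nprod act n a (smult r p) = smult r (mod_nprod act n a p)"
proof -
  define N where "N = mod_loc_bound act a p + mod_loc_bound act a p' + Suc n"
  have N: "mod_loc_bound act a p \<le> N" "mod_loc_bound act a p' \<le> N" "n < N"
    by (simp_all add: N_def)
  have add: "act a (poly (p + p')) x l = act a (poly p) x l + act a (poly p') x l"
    and smult: "act a (poly (smult r p)) x l = r * act a (poly p) x l" for x l
    by (simp_all add: act_poly_eq[OF cm] distrib_right)
  have "act a (poly (p + p')) x l =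
      (\<Sum>k<N. l ^ k / fact k * poly (mod_nprod act k a p + mod_nprod act k a p') x)" for x l
    by (simp only: add mod_nprod_expansion[OF N(1)] mod_nprod_expansion[OF N(2)]
        exp_series_add poly_add)
  from mod_nprod_unique[OF this] show "mod_nprod act n a (p + p') =
      mod_nprod act n a p + mod_nprod act n a p'" using N(3) by simp
  have "act a (poly (smult r p)) x l =
      (\<Sum>k<N. l ^ k / fact k * poly (smult r (mod_nprod act k a p)) x)" for x l
    by (simp only: smult mod_nprod_expansion[OF N(1)] exp_series_scale poly_smult)
  from mod_nprod_unique[OF this] show "mod_nprod act n a (smult r p) =
      smult r (mod_nprod act n a p)" using N(3) by simp
qed

lemma mod_nprod_der_left:
  "mod_nprod act 0 (cder C a) p = 0"
  "mod_nprod act (Suc n) (cder C a) p = smult (- of_nat (Suc n)) (mod_nprod act n a p)"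
proof -
  define N where "N = mod_loc_bound act a p + Suc n"
  have N: "mod_loc_bound act a p \<le> N" "n < N" by (simp_all add: N_def)
  define q where "q j = (case j of 0 \<Rightarrow> 0 | Suc k \<Rightarrow> smult (- of_nat j) (mod_nprod act k a p))"
    for j
  have q_eq: "poly (q j) x =
      (case j of 0 \<Rightarrow> 0 | Suc k \<Rightarrow> of_nat j * - poly (mod_nprod act k a p) x)" for j x
    by (simp add: q_def algebra_simps split: nat.split)
  have "act (cder C a) (poly p) x l = (\<Sum>j<Suc N. l ^ j / fact j * poly (q j) x)" for x l
  proof -
    have "act (cder C a) (poly p) x l =
        l * (\<Sum>k<N. l ^ k / fact k * - poly (mod_nprod act k a p) x)"
      by (simp add: conf_moduleD(5)[OF cm poly1_poly] mod_nprod_expansion[OF N(1)] sum_negf)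
    thus ?thesis by (simp only: exp_series_times_var q_eq)
  qed
  note q = mod_nprod_unique[OF this]
  show "mod_nprod act 0 (cder C a) p = 0" using q[of 0] by (simp add: q_def)
  show "mod_nprod act (Suc n) (cder C a) p = smult (- of_nat (Suc n)) (mod_nprod act n a p)"
    using q[of "Suc n"] N(2) by (simp add: q_def)
qed

lemma mod_nprod_der_right:
  "mod_nprod act 0 a (pCons 0 p) = pCons 0 (mod_nprod act 0 a p)"
  "mod_nprod act (Suc n) a (pCons 0 p) =
     pCons 0 (mod_nprod act (Suc n) a p) + smult (of_nat (Suc n)) (mod_nprod act n a p)"
proof -
  define N where "N = mod_loc_bound act a p + Suc n"
  have N: "mod_loc_bound act a p \<le> N" "n < N" by (simp_all add: N_def)
  define q where "q j = pCons 0 (mod_nprod act j a p) +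
      (case j of 0 \<Rightarrow> 0 | Suc k \<Rightarrow> smult (of_nat j) (mod_nprod act k a p))" for j
  have q_eq: "poly (q j) x = x * poly (mod_nprod act j a p) x +
      (case j of 0 \<Rightarrow> 0 | Suc k \<Rightarrow> of_nat j * poly (mod_nprod act k a p) x)" for j x
    by (simp add: q_def split: nat.split)
  have "act a (poly (pCons 0 p)) x l = (\<Sum>j<Suc N. l ^ j / fact j * poly (q j) x)" for x l
  proof -
    let ?S = "\<lambda>M. \<Sum>k<M. l ^ k / fact k * poly (mod_nprod act k a p) x"
    have "act a (poly (pCons 0 p)) x l = x * act a (poly p) x l + l * act a (poly p) x l"
      by (simp add: act_poly_eq[OF cm] algebra_simps)
    also have "\<dots> = x * ?S (Suc N) + l * ?S N"
      using N(1) by (simp add: mod_nprod_expansion[OF N(1)] mod_nprod_ge_loc_bound)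
    also have "\<dots> = (\<Sum>j<Suc N. l ^ j / fact j * poly (q j) x)"
      by (simp only: exp_series_times_var exp_series_scale exp_series_add q_eq)
    finally show ?thesis .
  qed
  note q = mod_nprod_unique[OF this]
  show "mod_nprod act 0 a (pCons 0 p) = pCons 0 (mod_nprod act 0 a p)"
    using q[of 0] by (simp add: q_def)
  show "mod_nprod act (Suc n) a (pCons 0 p) =
      pCons 0 (mod_nprod act (Suc n) a p) + smult (of_nat (Suc n)) (mod_nprod act n a p)"
    using q[of "Suc n"] N(2) by (simp add: q_def)
qed

end

lemma sum_square_eq_sum_antidiagonals:
  fixes f :: "nat \<Rightarrow> nat \<Rightarrow> 'a::comm_monoid_add"
  assumes "\<And>u w. K \<le> u \<or> K \<le> w \<Longrightarrow> f u w = 0"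
  shows "(\<Sum>u<K. \<Sum>w<K. f u w) = (\<Sum>i<2 * K. \<Sum>s\<le>i. f s (i - s))"
proof -
  have "(\<Sum>u<K. \<Sum>w<K. f u w) = (\<Sum>(u, w)\<in>{..<K} \<times> {..<K}. f u w)"
    by (simp add: sum.cartesian_product)
  also have "\<dots> = (\<Sum>(u, w)\<in>{(u, w). u + w < 2 * K}. f u w)"
  proof (rule sum.mono_neutral_left)
    show "finite {(u, w). u + w < 2 * K}"
      by (rule finite_subset[of _ "{..<2 * K} \<times> {..<2 * K}"]) auto
    show "\<forall>i\<in>{(u, w). u + w < 2 * K} - {..<K} \<times> {..<K}. (case i of (u, w) \<Rightarrow> f u w) = 0"
      by (auto intro!: assms simp: not_less)
  qed auto
  also have "\<dots> = (\<Sum>i<2 * K. \<Sum>s\<le>i. f s (i - s))"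
    by (rule sum.triangle_reindex)
  finally show ?thesis .
qed

lemma sum_square_extend:
  fixes G :: "nat \<Rightarrow> nat \<Rightarrow> 'a::comm_monoid_add"
  assumes "\<And>i j. K \<le> i \<or> K \<le> j \<Longrightarrow> G i j = 0" "K \<le> N"
  shows "(\<Sum>j<K. \<Sum>i<K. G i j) = (\<Sum>j<N. \<Sum>i<N. G i j)"
proof -
  have "(\<Sum>i<N. G i j) = (\<Sum>i<K. G i j)" for j
    by (rule sum_lessThan_truncate) (use assms in auto)
  moreover have "(\<Sum>j<N. \<Sum>i<K. G i j) = (\<Sum>j<K. \<Sum>i<K. G i j)"
    by (rule sum_lessThan_truncate) (use assms in auto)
  ultimately show ?thesis by simp
qed

lemma power_add_div_fact:
  fixes a b :: "'k::field_char_0"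
  shows "(a + b) ^ r / fact r = (\<Sum>s\<le>r. a ^ s / fact s * (b ^ (r - s) / fact (r - s)))"
proof -
  have "(a + b) ^ r / fact r = (\<Sum>s\<le>r. of_nat (r choose s) * a ^ s * b ^ (r - s) / fact r)"
    by (simp add: binomial_ring sum_divide_distrib)
  also have "\<dots> = (\<Sum>s\<le>r. a ^ s / fact s * (b ^ (r - s) / fact (r - s)))"
    by (intro sum.cong refl) (simp add: binomial_fact field_simps)
  finally show ?thesis .
qed

lemma exp_series_shift:
  fixes a b :: "'k::field_char_0" and T :: "nat \<Rightarrow> 'k"
  assumes "\<And>r. K \<le> r \<Longrightarrow> T r = 0"
  shows "(\<Sum>r<K. (a + b) ^ r / fact r * T r) =
    (\<Sum>s<K. \<Sum>w<K. a ^ s / fact s * (b ^ w / fact w * T (s + w)))"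
proof -
  have "(\<Sum>r<K. (a + b) ^ r / fact r * T r) = (\<Sum>r<2 * K. (a + b) ^ r / fact r * T r)"
    by (rule sum_lessThan_truncate[symmetric]) (use assms in auto)
  also have "\<dots> = (\<Sum>r<2 * K. \<Sum>s\<le>r. a ^ s / fact s * (b ^ (r - s) / fact (r - s) * T (s + (r - s))))"
    unfolding power_add_div_fact by (auto simp: sum_distrib_right mult.assoc intro!: sum.cong)
  also have "\<dots> = (\<Sum>s<K. \<Sum>w<K. a ^ s / fact s * (b ^ w / fact w * T (s + w)))"
    by (rule sum_square_eq_sum_antidiagonals[symmetric]) (use assms in auto)
  finally show ?thesis .
qed

lemma exp_series_mult:
  fixes a :: "'k::field_char_0" and U :: "nat \<Rightarrow> nat \<Rightarrow> 'k"
  assumes "\<And>k s. K \<le> k \<or> K \<le> s \<Longrightarrow> U k s = 0"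
  shows "(\<Sum>k<K. a ^ k / fact k * (\<Sum>s<K. a ^ s / fact s * U k s)) =
    (\<Sum>i<2 * K. a ^ i / fact i * (\<Sum>s\<le>i. of_nat (i choose s) * U (i - s) s))"
proof -
  have "(\<Sum>k<K. a ^ k / fact k * (\<Sum>s<K. a ^ s / fact s * U k s)) =
      (\<Sum>s<K. \<Sum>k<K. a ^ k / fact k * (a ^ s / fact s * U k s))"
    unfolding sum_distrib_left by (rule sum.swap)
  also have "\<dots> = (\<Sum>i<2 * K. \<Sum>s\<le>i. a ^ (i - s) / fact (i - s) * (a ^ s / fact s * U (i - s) s))"
    by (rule sum_square_eq_sum_antidiagonals) (use assms in auto)
  also have "\<dots> = (\<Sum>i<2 * K. a ^ i / fact i * (\<Sum>s\<le>i. of_nat (i choose s) * U (i - s) s))"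
    unfolding sum_distrib_left
  proof (intro sum.cong refl)
    fix i s :: nat
    assume "s \<in> {..i}"
    hence "a ^ i = a ^ (i - s) * a ^ s" "(of_nat (i choose s) :: 'k) = fact i / (fact s * fact (i - s))"
      by (simp_all add: power_add[symmetric] binomial_fact)
    thus "a ^ (i - s) / fact (i - s) * (a ^ s / fact s * U (i - s) s) =
        a ^ i / fact i * (of_nat (i choose s) * U (i - s) s)"
      by (simp add: field_simps)
  qed
  finally show ?thesis .
qed

text \<open>The generating-function form of \<open>(a\<^sub>\<lambda> b)\<^sub>\<lambda>\<^sub>+\<^sub>\<mu> q\<close>, whose coefficient of
  \<open>\<lambda>\<^sup>n \<mu>\<^sup>m / (n! m!)\<close> is \<open>\<Sum>\<^sub>s (n choose s) (a\<^sub>(\<^sub>n\<^sub>-\<^sub>s\<^sub>) b)\<^sub>(\<^sub>m\<^sub>+\<^sub>s\<^sub>) q\<close>.\<close>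
lemma exp_series_compose:
  fixes T :: "nat \<Rightarrow> nat \<Rightarrow> 'k::field_char_0"
  assumes T: "\<And>k r. K \<le> k \<or> K \<le> r \<Longrightarrow> T k r = 0"
  shows "(\<Sum>k<K. l1 ^ k / fact k * (\<Sum>r<K. (l1 + l2) ^ r / fact r * T k r)) =
    (\<Sum>j<2 * K. \<Sum>i<2 * K. (\<Sum>s\<le>i. of_nat (i choose s) * T (i - s) (s + j)) / (fact i * fact j)
       * l1 ^ i * l2 ^ j)"
proof -
  define U where "U k s = (\<Sum>w<K. l2 ^ w / fact w * T k (s + w))" for k s
  define R where "R i j = (\<Sum>s\<le>i. of_nat (i choose s) * T (i - s) (s + j))" for i j
  have "(\<Sum>r<K. (l1 + l2) ^ r / fact r * T k r) = (\<Sum>s<K. l1 ^ s / fact s * U k s)" for k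
    unfolding U_def sum_distrib_left by (rule exp_series_shift) (use T in auto)
  hence "(\<Sum>k<K. l1 ^ k / fact k * (\<Sum>r<K. (l1 + l2) ^ r / fact r * T k r)) =
      (\<Sum>k<K. l1 ^ k / fact k * (\<Sum>s<K. l1 ^ s / fact s * U k s))"
    by simp
  also have "\<dots> = (\<Sum>i<2 * K. l1 ^ i / fact i * (\<Sum>s\<le>i. of_nat (i choose s) * U (i - s) s))"
    by (rule exp_series_mult) (use T in \<open>auto simp: U_def\<close>)
  also have "\<dots> = (\<Sum>i<2 * K. l1 ^ i / fact i * (\<Sum>j<2 * K. l2 ^ j / fact j * R i j))"
  proof -
    have "(\<Sum>s\<le>i. of_nat (i choose s) * U (i - s) s) = (\<Sum>j<K. l2 ^ j / fact j * R i j)" for i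
      unfolding U_def R_def sum_distrib_left by (subst sum.swap) (simp add: mult_ac)
    also have "\<dots> i = (\<Sum>j<2 * K. l2 ^ j / fact j * R i j)" for i
      by (rule sum_lessThan_truncate[symmetric]) (use T in \<open>auto simp: R_def\<close>)
    finally show ?thesis by simp
  qed
  also have "\<dots> = (\<Sum>j<2 * K. \<Sum>i<2 * K. R i j / (fact i * fact j) * l1 ^ i * l2 ^ j)"
    unfolding sum_distrib_left by (subst sum.swap) (simp add: field_simps)
  finally show ?thesis unfolding R_def .
qed

context
  fixes C :: "('k::field_char_0, 'c) conf_alg" and act
  assumes cm: "conf_module C act" and ac: "assoc_conf C"
begin

lemma mod_nprod_zero_right: "mod_nprod act n a 0 = 0"
  using mod_nprod_smult_right[OF cm, of n a 0 0] by simp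

lemma mod_nprod_zero_left: "mod_nprod act n (czero C) p = 0"
  using mod_nprod_smult_left[OF cm, of n 0 a p] kspace_zero_smul[OF assoc_confD(1)[OF ac]] by simp

lemma mod_nprod_assoc_bound:
  obtains K where "n < K" "m < K"
    "\<And>k. K \<le> k \<Longrightarrow> cprod C k a b = czero C"
    "\<And>j. K \<le> j \<Longrightarrow> mod_nprod act j b q = 0"
    "\<And>i j. K \<le> i \<or> K \<le> j \<Longrightarrow> mod_nprod act i a (mod_nprod act j b q) = 0"
    "\<And>k r. K \<le> k \<or> K \<le> r \<Longrightarrow> mod_nprod act r (cprod C k a b) q = 0"
proof -
  define K1 where "K1 = loc_bound C a b + mod_loc_bound act b q + Suc n + Suc m"
  define K where "K = K1 + (\<Sum>j<K1. mod_loc_bound act a (mod_nprod act j b q))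
      + (\<Sum>k<K1. mod_loc_bound act (cprod C k a b) q)"
  have K1K: "K1 \<le> K" by (simp add: K_def)
  have cz: "cprod C k a b = czero C" if "K1 \<le> k" for k
    by (rule cprod_ge_loc_bound[OF ac]) (use that in \<open>simp add: K1_def\<close>)
  have bz: "mod_nprod act j b q = 0" if "K1 \<le> j" for j
    by (rule mod_nprod_ge_loc_bound) (use that in \<open>simp add: K1_def\<close>)
  have Lz: "mod_nprod act i a (mod_nprod act j b q) = 0" if "K \<le> i \<or> K \<le> j" for i j
  proof (cases "K1 \<le> j")
    case False
    hence "mod_loc_bound act a (mod_nprod act j b q) \<le> (\<Sum>j<K1. mod_loc_bound act a (mod_nprod act j b q))"
      by (intro member_le_sum) auto
    hence "mod_loc_bound act a (mod_nprod act j b q) \<le> i"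
      using that K1K False unfolding K_def by linarith
    thus ?thesis by (rule mod_nprod_ge_loc_bound)
  qed (simp add: bz mod_nprod_zero_right)
  have Tz: "mod_nprod act r (cprod C k a b) q = 0" if "K \<le> k \<or> K \<le> r" for k r
  proof (cases "K1 \<le> k")
    case False
    hence "mod_loc_bound act (cprod C k a b) q \<le> (\<Sum>k<K1. mod_loc_bound act (cprod C k a b) q)"
      by (intro member_le_sum) auto
    hence "mod_loc_bound act (cprod C k a b) q \<le> r"
      using that K1K False unfolding K_def by linarith
    thus ?thesis by (rule mod_nprod_ge_loc_bound)
  qed (simp add: cz mod_nprod_zero_left)
  show thesis
  proof (rule that[OF _ _ _ _ Lz Tz])
    show "n < K" "m < K" using K1K by (simp_all add: K1_def)
    show "cprod C k a b = czero C" if "K \<le> k" for k using that K1K by (intro cz) simp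
    show "mod_nprod act j b q = 0" if "K \<le> j" for j using that K1K by (intro bz) simp
  qed
qed

lemma act_act_double_series:
  assumes bz: "\<And>j. K \<le> j \<Longrightarrow> mod_nprod act j b q = 0"
    and Lz: "\<And>i j. K \<le> i \<or> K \<le> j \<Longrightarrow> mod_nprod act i a (mod_nprod act j b q) = 0"
    and "K \<le> N"
  shows "act a (\<lambda>y. act b (poly q) y l2) x l1 = (\<Sum>j<N. \<Sum>i<N.
    poly (mod_nprod act i a (mod_nprod act j b q)) x / (fact i * fact j) * l1 ^ i * l2 ^ j)"
proof -
  have "(\<lambda>y. act b (poly q) y l2) = poly (\<Sum>j<K. smult (l2 ^ j / fact j) (mod_nprod act j b q))"
    by (simp add: fun_eq_iff mod_nprod_expansion_if_vanishing[OF cm bz] poly_sum)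
  hence "act a (\<lambda>y. act b (poly q) y l2) x l1 =
      (\<Sum>j<K. l2 ^ j / fact j * act a (poly (mod_nprod act j b q)) x l1)"
    by (simp add: act_poly_eq[OF cm] poly_sum sum_distrib_left sum_distrib_right mult_ac)
  also have "\<dots> = (\<Sum>j<K. l2 ^ j / fact j *
      (\<Sum>i<K. l1 ^ i / fact i * poly (mod_nprod act i a (mod_nprod act j b q)) x))"
    by (simp add: mod_nprod_expansion_if_vanishing[OF cm Lz])
  also have "\<dots> = (\<Sum>j<K. \<Sum>i<K.
      poly (mod_nprod act i a (mod_nprod act j b q)) x / (fact i * fact j) * l1 ^ i * l2 ^ j)"
    unfolding sum_distrib_left by (intro sum.cong refl) (simp add: field_simps)
  also have "\<dots> = (\<Sum>j<N. \<Sum>i<N.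
      poly (mod_nprod act i a (mod_nprod act j b q)) x / (fact i * fact j) * l1 ^ i * l2 ^ j)"
    by (rule sum_square_extend) (use Lz \<open>K \<le> N\<close> in auto)
  finally show ?thesis .
qed

lemma act_cprod_double_series:
  assumes cz: "\<And>k. K \<le> k \<Longrightarrow> cprod C k a b = czero C"
    and Tz: "\<And>k r. K \<le> k \<or> K \<le> r \<Longrightarrow> mod_nprod act r (cprod C k a b) q = 0"
  shows "act a (\<lambda>y. act b (poly q) y l2) x l1 = (\<Sum>j<2 * K. \<Sum>i<2 * K.
    poly (\<Sum>s\<le>i. smult (of_nat (i choose s)) (mod_nprod act (s + j) (cprod C (i - s) a b) q)) x
      / (fact i * fact j) * l1 ^ i * l2 ^ j)"
proof -
  have "act a (\<lambda>y. act b (poly q) y l2) x l1 =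
      (\<Sum>k<K. l1 ^ k / fact k * act (cprod C k a b) (poly q) x (l1 + l2))"
    by (rule conf_module_assoc[OF cm poly1_poly]) (use cz in auto)
  also have "\<dots> = (\<Sum>k<K. l1 ^ k / fact k *
      (\<Sum>r<K. (l1 + l2) ^ r / fact r * poly (mod_nprod act r (cprod C k a b) q) x))"
    by (simp add: mod_nprod_expansion_if_vanishing[OF cm Tz])
  also have "\<dots> = (\<Sum>j<2 * K. \<Sum>i<2 * K.
      poly (\<Sum>s\<le>i. smult (of_nat (i choose s)) (mod_nprod act (s + j) (cprod C (i - s) a b) q)) x
        / (fact i * fact j) * l1 ^ i * l2 ^ j)"
    by (subst exp_series_compose) (simp_all add: Tz poly_sum)
  finally show ?thesis .
qed

lemma mod_nprod_assoc:
  "mod_nprod act n a (mod_nprod act m b q) =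
     (\<Sum>i<Suc n. smult (of_nat (n choose i)) (mod_nprod act (m + i) (cprod C (n - i) a b) q))"
proof -
  obtain K where K: "n < K" "m < K" "\<And>k. K \<le> k \<Longrightarrow> cprod C k a b = czero C"
    "\<And>j. K \<le> j \<Longrightarrow> mod_nprod act j b q = 0"
    "\<And>i j. K \<le> i \<or> K \<le> j \<Longrightarrow> mod_nprod act i a (mod_nprod act j b q) = 0"
    "\<And>k r. K \<le> k \<or> K \<le> r \<Longrightarrow> mod_nprod act r (cprod C k a b) q = 0"
    using mod_nprod_assoc_bound[where n = n and m = m and a = a and b = b and q = q] by blast
  define R where "R i j = (\<Sum>s\<le>i. smult (of_nat (i choose s)) (mod_nprod act (s + j) (cprod C (i - s) a b) q))"
    for i j
  have "(\<Sum>j<2 * K. \<Sum>i<2 * K.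
      poly (mod_nprod act i a (mod_nprod act j b q)) x / (fact i * fact j) * l1 ^ i * l2 ^ j) =
    (\<Sum>j<2 * K. \<Sum>i<2 * K. poly (R i j) x / (fact i * fact j) * l1 ^ i * l2 ^ j)" for x l1 l2
    using act_act_double_series[where K = K and N = "2 * K", OF K(4,5)]
      act_cprod_double_series[where K = K, OF K(3,6)]
    by (simp add: R_def)
  hence "poly (mod_nprod act n a (mod_nprod act m b q)) x / (fact n * fact m) =
      poly (R n m) x / (fact n * fact m)" for x
    by (rule double_power_sum_coeffs_eq) (use K(1,2) in auto)
  hence "mod_nprod act n a (mod_nprod act m b q) = R n m"
    by (simp add: poly_eq_poly_eq_iff[symmetric] fun_eq_iff)
  thus ?thesis unfolding R_def by (simp add: lessThan_Suc_atMost add.commute)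
qed

end

section \<open>Universality of \<open>U(3)\<close> on equipotent carriers\<close>

definition conf_morphism :: "('k, 'c) conf_alg \<Rightarrow> ('k, 'd) conf_alg \<Rightarrow> ('c \<Rightarrow> 'd) \<Rightarrow> bool" where
  "conf_morphism C A f \<longleftrightarrow>
     (\<forall>a b. f (cadd C a b) = cadd A (f a) (f b)) \<and>
     (\<forall>r a. f (csmul C r a) = csmul A r (f a)) \<and>
     (\<forall>a. f (cder C a) = cder A (f a)) \<and>
     (\<forall>n a b. f (cprod C n a b) = cprod A n (f a) (f b))"

definition conf_transport :: "('d \<Rightarrow> 'c) \<Rightarrow> ('c \<Rightarrow> 'd) \<Rightarrow> ('k, 'd) conf_alg \<Rightarrow> ('k, 'c) conf_alg" where
  "conf_transport e e' B = \<lparr>cadd = (\<lambda>a b. e (cadd B (e' a) (e' b))),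
     czero = e (czero B),
     cneg = (\<lambda>a. e (cneg B (e' a))),
     csmul = (\<lambda>r a. e (csmul B r (e' a))),
     cder = (\<lambda>a. e (cder B (e' a))),
     cprod = (\<lambda>n a b. e (cprod B n (e' a) (e' b)))\<rparr>"

lemma conf_transport_simps:
  "cadd (conf_transport e e' B) a b = e (cadd B (e' a) (e' b))"
  "czero (conf_transport e e' B) = e (czero B)"
  "cneg (conf_transport e e' B) a = e (cneg B (e' a))"
  "csmul (conf_transport e e' B) r a = e (csmul B r (e' a))"
  "cder (conf_transport e e' B) a = e (cder B (e' a))"
  "cprod (conf_transport e e' B) n a b = e (cprod B n (e' a) (e' b))"
  by (simp_all add: conf_transport_def)

context
  fixes e :: "'d \<Rightarrow> 'c" and e' :: "'c \<Rightarrow> 'd"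
  assumes inv1: "\<And>z. e' (e z) = z" and inv2: "\<And>a. e (e' a) = a"
begin

lemma csumn_conf_transport: "csumn (conf_transport e e' B) f k = e (csumn B (\<lambda>i. e' (f i)) k)"
  by (induction k) (simp_all add: conf_transport_simps inv1)

lemma assoc_conf_transport:
  assumes ac: "assoc_conf (B :: ('k::field_char_0, 'd) conf_alg)"
  shows "assoc_conf (conf_transport e e' B)"
proof -
  note K = kspaceD[OF assoc_confD(1)[OF ac]]
  have "kspace (conf_transport e e' B)"
  proof (unfold kspace_def conf_transport_simps, intro conjI allI)
    show "e (cadd B (e' a) (e' b)) = e (cadd B (e' b) (e' a))" for a b
      by (simp only: K(2))
  qed (simp_all add: inv1 inv2 K(1,3-8))
  moreover have "\<exists>N. \<forall>n\<ge>N. cprod (conf_transport e e' B) n a b = czero (conf_transport e e' B)"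
    for a b
    using assoc_confD(8)[OF ac, of "e' a" "e' b"] by (simp add: conf_transport_simps) metis
  ultimately show ?thesis
    unfolding assoc_conf_def
    by (simp add: conf_transport_simps csumn_conf_transport inv1 inv2 assoc_confD[OF ac])
qed

lemma U3_rels_conf_transport: "U3_rels B w \<Longrightarrow> U3_rels (conf_transport e e' B) (e w)"
  unfolding U3_rels_def by (simp add: conf_transport_simps inv1)

end

lemma is_U3_universal_any_carrier:
  fixes C :: "('k::field_char_0, 'c) conf_alg" and B :: "('k, 'd) conf_alg" and e :: "'d \<Rightarrow> 'c"
  assumes U: "is_U3 C v" and ac: "assoc_conf B" and rels: "U3_rels B w" and "bij e"
  shows "\<exists>H. conf_morphism C B H \<and> H v = w"
proof -
  define e' where "e' = inv e"
  have inv1: "e' (e z) = z" for z using \<open>bij e\<close> by (simp add: e'_def bij_def inv_f_f)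
  have inv2: "e (e' a) = a" for a using \<open>bij e\<close> by (simp add: e'_def bij_def surj_f_inv_f)
  define A where "A = conf_transport e e' B"
  have "assoc_conf A" "U3_rels A (e w)"
    unfolding A_def using assoc_conf_transport[OF inv1 inv2 ac] U3_rels_conf_transport[OF inv1 inv2 rels]
    by simp_all
  then obtain h where h: "conf_hom C A h" "h v = e w"
    using U unfolding is_U3_def by blast
  have "conf_morphism C B (\<lambda>a. e' (h a))"
    using h(1) unfolding conf_hom_def conf_morphism_def A_def by (simp add: conf_transport_simps inv1)
  moreover have "e' (h v) = w" by (simp add: h(2) inv1)
  ultimately show ?thesis by blast
qed

lemma card_of_poly_ordLeq:
  assumes "infinite (UNIV :: 'k set)"
  shows "(card_of (UNIV :: 'k::zero poly set), card_of (UNIV :: 'k set)) \<in> ordLeq"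
proof -
  define D where "D n = {p :: 'k poly. degree p \<le> n}" for n
  have "(card_of (D n), card_of (UNIV :: 'k set)) \<in> ordLeq" for n
  proof (induction n)
    case 0
    have "D 0 \<subseteq> (\<lambda>c. [:c:]) ` UNIV"
      unfolding D_def by (auto simp: image_iff intro!: exI[of _ "coeff _ 0"] degree_0_id[symmetric])
    hence "(card_of (D 0), card_of ((\<lambda>c. [:c:]) ` (UNIV :: 'k set))) \<in> ordLeq"
      by (rule card_of_mono1)
    thus ?case using card_of_image ordLeq_transitive by blast
  next
    case (Suc n)
    have "D (Suc n) \<subseteq> (\<lambda>(c, q). pCons c q) ` (UNIV \<times> D n)"
    proof
      fix p assume "p \<in> D (Suc n)"
      obtain a q where "p = pCons a q" by (cases p)
      thus "p \<in> (\<lambda>(c, q). pCons c q) ` (UNIV \<times> D n)"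
        using \<open>p \<in> D (Suc n)\<close> unfolding D_def
        by (force simp: degree_pCons_eq_if split: if_splits)
    qed
    hence "(card_of (D (Suc n)), card_of ((\<lambda>(c, q). pCons c q) ` (UNIV \<times> D n))) \<in> ordLeq"
      by (rule card_of_mono1)
    hence "(card_of (D (Suc n)), card_of ((UNIV :: 'k set) \<times> D n)) \<in> ordLeq"
      using card_of_image ordLeq_transitive by blast
    moreover have "(card_of ((UNIV :: 'k set) \<times> D n), card_of ((UNIV :: 'k set) \<times> (UNIV :: 'k set)))
        \<in> ordLeq"
      using Suc card_of_Times_mono2 by blast
    moreover have "(card_of ((UNIV :: 'k set) \<times> (UNIV :: 'k set)), card_of (UNIV :: 'k set)) \<in> ordIso"
      using card_of_Times_same_infinite[OF assms] by blast
    ultimately show ?case by (meson ordLeq_transitive ordLeq_ordIso_trans)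
  qed
  moreover have "UNIV = (\<Union>n. D n)" unfolding D_def by auto
  ultimately show ?thesis
    using card_of_UNION_ordLeq_infinite[OF assms, of UNIV D] infinite_iff_card_of_nat[of UNIV] assms
    by (metis UNIV_I)
qed

lemma exists_bij_prod_poly:
  fixes C :: "('k::field_char_0, 'c) conf_alg"
  assumes ks: "kspace C" and v: "v \<noteq> czero C"
  shows "\<exists>e :: 'c \<times> 'k poly \<Rightarrow> 'c. bij e"
proof -
  have inj: "inj (\<lambda>r. csmul C r v)"
    using kspace_smul_left_inj[OF ks v] by (auto simp: inj_def)
  have infk: "infinite (UNIV :: 'k set)" by (rule infinite_UNIV_char_0)
  have infc: "infinite (UNIV :: 'c set)"
    using inj infk finite_imageD[of "\<lambda>r. csmul C r v" UNIV] finite_subset[of "range _" UNIV]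
    by (metis subset_UNIV)
  have "(card_of (UNIV :: 'k set), card_of (UNIV :: 'c set)) \<in> ordLeq"
    using inj card_of_ordLeq[of "UNIV :: 'k set" "UNIV :: 'c set"] by blast
  hence "(card_of (UNIV :: 'k poly set), card_of (UNIV :: 'c set)) \<in> ordLeq"
    using card_of_poly_ordLeq[OF infk] ordLeq_transitive by blast
  hence "(card_of ((UNIV :: 'c set) \<times> (UNIV :: 'k poly set)), card_of (UNIV :: 'c set)) \<in> ordIso"
    using card_of_Times_infinite[OF infc] by blast
  then obtain f where "bij_betw f ((UNIV :: 'c set) \<times> (UNIV :: 'k poly set)) (UNIV :: 'c set)"
    using card_of_ordIso by blast
  thus ?thesis by auto
qed

section \<open>Cocycles from module homomorphisms \<open>U(3) \<rightarrow> M\<close>\<close>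

text \<open>The split extension \<open>C \<ltimes> M\<close>, with \<open>M = \<Bbbk>[\<partial>]\<close> a square-zero ideal.\<close>
definition split_ext ::
  "('k::field_char_0, 'c) conf_alg \<Rightarrow> ('c \<Rightarrow> ('k \<Rightarrow> 'k) \<Rightarrow> 'k \<Rightarrow> 'k \<Rightarrow> 'k) \<Rightarrow>
   ('k, 'c \<times> 'k poly) conf_alg" where
  "split_ext C act = \<lparr>cadd = (\<lambda>x y. (cadd C (fst x) (fst y), snd x + snd y)),
     czero = (czero C, 0),
     cneg = (\<lambda>x. (cneg C (fst x), - snd x)),
     csmul = (\<lambda>r x. (csmul C r (fst x), smult r (snd x))),
     cder = (\<lambda>x. (cder C (fst x), pCons 0 (snd x))),
     cprod = (\<lambda>n x y. (cprod C n (fst x) (fst y), mod_nprod act n (fst x) (snd y)))\<rparr>"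

lemma split_ext_simps:
  "cadd (split_ext C act) x y = (cadd C (fst x) (fst y), snd x + snd y)"
  "czero (split_ext C act) = (czero C, 0)"
  "cneg (split_ext C act) x = (cneg C (fst x), - snd x)"
  "csmul (split_ext C act) r x = (csmul C r (fst x), smult r (snd x))"
  "cder (split_ext C act) x = (cder C (fst x), pCons 0 (snd x))"
  "cprod (split_ext C act) n x y = (cprod C n (fst x) (fst y), mod_nprod act n (fst x) (snd y))"
  by (simp_all add: split_ext_def)

lemma csumn_split_ext:
  "csumn (split_ext C act) f k = (csumn C (\<lambda>i. fst (f i)) k, \<Sum>i<k. snd (f i))"
  by (induction k) (simp_all add: split_ext_simps)

lemma assoc_conf_split_ext:
  fixes C :: "('k::field_char_0, 'c) conf_alg"
  assumes cm: "conf_module C act" and ac: "assoc_conf C"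
  shows "assoc_conf (split_ext C act)"
proof -
  note K = kspaceD[OF assoc_confD(1)[OF ac]]
  have "kspace (split_ext C act)"
  proof (unfold kspace_def split_ext_simps, intro conjI allI)
    show "(cadd C (fst a) (fst b), snd a + snd b) = (cadd C (fst b) (fst a), snd b + snd a)"
      for a b :: "'c \<times> 'k poly"
      using K(2) by (simp add: add.commute)
  qed (simp_all add: K(1,3-8) add.assoc smult_add_right smult_add_left)
  moreover have "\<exists>N. \<forall>n\<ge>N. cprod (split_ext C act) n a b = czero (split_ext C act)" for a b
  proof -
    obtain N where "\<forall>n\<ge>N. cprod C n (fst a) (fst b) = czero C" using assoc_confD(8)[OF ac] by blast
    thus ?thesis
      by (intro exI[of _ "N + mod_loc_bound act (fst a) (snd b)"])
        (auto simp: split_ext_simps mod_nprod_ge_loc_bound)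
  qed
  ultimately show ?thesis
    unfolding assoc_conf_def
    by (simp add: split_ext_simps csumn_split_ext assoc_confD[OF ac]
        mod_nprod_add_left[OF cm] mod_nprod_smult_left[OF cm]
        mod_nprod_add_right[OF cm] mod_nprod_smult_right[OF cm]
        mod_nprod_der_left[OF cm] mod_nprod_der_right[OF cm] mod_nprod_assoc[OF cm ac] smult_pCons)
qed

definition conf_module_hom ::
  "('k::field_char_0, 'c) conf_alg \<Rightarrow> ('c \<Rightarrow> ('k \<Rightarrow> 'k) \<Rightarrow> 'k \<Rightarrow> 'k \<Rightarrow> 'k) \<Rightarrow> ('c \<Rightarrow> 'k poly) \<Rightarrow> bool"
  where
  "conf_module_hom C act G \<longleftrightarrow>
     (\<forall>a b. G (cadd C a b) = G a + G b) \<and>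
     (\<forall>r a. G (csmul C r a) = smult r (G a)) \<and>
     (\<forall>a. G (cder C a) = pCons 0 (G a)) \<and>
     (\<forall>n a b. G (cprod C n a b) = mod_nprod act n a (G b))"

text \<open>Apply the universal property to \<open>C \<ltimes> M\<close>; its first component is then the identity,
  again by universality.\<close>
lemma exists_conf_module_hom:
  fixes C :: "('k::field_char_0, 'c) conf_alg"
  assumes U: "is_U3 C v" and cm: "conf_module C act"
    and rels: "U3_rels (split_ext C act) (v, m0)"
  shows "\<exists>G. conf_module_hom C act G \<and> G v = m0"
proof -
  have ac: "assoc_conf C" and "v \<noteq> czero C"
    and univ: "\<exists>!f. conf_hom C C f \<and> f v = v"
    using U unfolding is_U3_def by blast+
  obtain e :: "'c \<times> 'k poly \<Rightarrow> 'c" where "bij e"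
    using exists_bij_prod_poly[OF assoc_confD(1)[OF ac] \<open>v \<noteq> czero C\<close>] by blast
  then obtain H where H: "conf_morphism C (split_ext C act) H" "H v = (v, m0)"
    using is_U3_universal_any_carrier[OF U assoc_conf_split_ext[OF cm ac] rels] by blast
  have "conf_hom C C (\<lambda>a. fst (H a))" "conf_hom C C (\<lambda>a. a)"
    using H(1) unfolding conf_hom_def conf_morphism_def by (simp_all add: split_ext_simps)
  hence "(\<lambda>a. fst (H a)) = (\<lambda>a. a)" using univ H(2) by (metis fst_conv)
  hence "conf_module_hom C act (\<lambda>a. snd (H a))"
    using H(1) unfolding conf_module_hom_def conf_morphism_def
    by (simp add: split_ext_simps fun_eq_iff)
  thus ?thesis using H(2) by force
qed

lemma gen_act_divided_difference:
  fixes C :: "('k::field_char_0, 'c) conf_alg"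
  assumes cm: "conf_module C act"
  obtains D where "\<And>a. poly3 (D a)"
    "\<And>a x l1 l2. gen_act act a x l1 - gen_act act a (- l1 - l2) l1 = (x + l1 + l2) * D a x l1 l2"
    "\<And>a b x l1 l2. D (cadd C a b) x l1 l2 = D a x l1 l2 + D b x l1 l2"
    "\<And>r a x l1 l2. D (csmul C r a) x l1 l2 = r * D a x l1 l2"
    "\<And>a x l1 l2. D (cder C a) x l1 l2 = - l1 * D a x l1 l2"
proof -
  obtain D where D: "\<And>a. poly3 (D a)"
    "\<And>a x l1 l2. gen_act act a x l1 - gen_act act a (- l1 - l2) l1 = (x + l1 + l2) * D a x l1 l2"
    using poly2_diff_antidiagonal_divisible[OF gen_act_props(1)[OF cm]] by metis
  have p: "poly1 (\<lambda>x. D a x l1 l2)" "poly1 (\<lambda>x. r * D a x l1 l2)" for r a l1 l2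
    by (intro poly1_mult poly1_const poly3_fix_snd_thd D(1))+
  have Dq: "(x + (l1 + l2)) * D a x l1 l2 = gen_act act a x l1 - gen_act act a (- l1 - l2) l1"
    for a x l1 l2
    using D(2) by (simp add: add.assoc)
  have cancel: "D a x l1 l2 = E x" if "\<And>x. (x + (l1 + l2)) * D a x l1 l2 = (x + (l1 + l2)) * E x"
    and "poly1 E" for a l1 l2 x and E :: "'k \<Rightarrow> 'k"
    using poly1_mult_linear_cancel[OF p(1) that(2) that(1)] by simp
  show thesis
  proof (rule that[OF D])
    show "D (cadd C a b) x l1 l2 = D a x l1 l2 + D b x l1 l2" for a b x l1 l2
      by (rule cancel[OF _ poly1_add[OF p(1) p(1)]])
        (simp only: distrib_left Dq gen_act_props(2)[OF cm]; simp)
    show "D (csmul C r a) x l1 l2 = r * D a x l1 l2" for r a x l1 l2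
      by (rule cancel[OF _ p(2)])
        (simp only: mult.left_commute[of _ r] Dq gen_act_props(3)[OF cm] right_diff_distrib)
    show "D (cder C a) x l1 l2 = - l1 * D a x l1 l2" for a x l1 l2
      by (rule cancel[OF _ p(2)])
        (simp only: mult.left_commute[of _ "- l1"] Dq gen_act_props(4)[OF cm] right_diff_distrib)
  qed
qed

lemma conf_module_homD:
  assumes "conf_module_hom C act G"
  shows "G (cadd C a b) = G a + G b" "G (csmul C r a) = smult r (G a)"
    "G (cder C a) = pCons 0 (G a)" "G (cprod C n a b) = mod_nprod act n a (G b)"
  using assms unfolding conf_module_hom_def by blast+

lemma hd1_conf_module_hom:
  fixes C :: "('k::field_char_0, 'c) conf_alg"
  assumes cm: "conf_module C act" and ac: "assoc_conf C" and G: "conf_module_hom C act G"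
  shows "hd1 C act (\<lambda>a x l. poly (G a) (- l)) a b x l1 l2 =
    poly (G b) (- l2) * (gen_act act a x l1 - gen_act act a (- l1 - l2) l1)"
proof -
  have "G (czero C) = 0"
    using additive_map_zero[OF assoc_confD(1)[OF ac] conf_module_homD(1)[OF G]] .
  hence vanish: "mod_nprod act n a (G b) = 0" if "loc_bound C a b \<le> n" for n
    using cprod_ge_loc_bound[OF ac that] by (simp add: conf_module_homD(4)[OF G, symmetric])
  have "(\<Sum>n<loc_bound C a b. l1 ^ n / fact n * poly (G (cprod C n a b)) (- (l1 + l2))) =
      act a (poly (G b)) (- l1 - l2) l1"
    by (simp add: conf_module_homD(4)[OF G] mod_nprod_expansion_if_vanishing[OF cm vanish])
  also have "\<dots> = poly (G b) (- l2) * gen_act act a (- l1 - l2) l1"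
    by (simp add: act_poly_eq[OF cm])
  finally show ?thesis
    unfolding hd1_def by (simp add: act_poly1_eq[OF cm poly1_const] right_diff_distrib)
qed

text \<open>The two terms of \<open>d\<phi>\<close> differ only in the first argument of \<open>gen_act act a\<close>, which is
  why \<open>d\<phi>\<close> is divisible by \<open>\<partial> + \<lambda>\<^sub>1 + \<lambda>\<^sub>2\<close>.\<close>
lemma conf_module_hom_Z1:
  fixes C :: "('k::field_char_0, 'c) conf_alg"
  assumes cm: "conf_module C act" and ac: "assoc_conf C" and G: "conf_module_hom C act G"
  shows "(\<lambda>a x l. poly (G a) (- l)) \<in> Z1 C act"
proof -
  note G' = conf_module_homD[OF G]
  obtain D where D: "\<And>a. poly3 (D a)"
    "\<And>a x l1 l2. gen_act act a x l1 - gen_act act a (- l1 - l2) l1 = (x + l1 + l2) * D a x l1 l2"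
    "\<And>a b x l1 l2. D (cadd C a b) x l1 l2 = D a x l1 l2 + D b x l1 l2"
    "\<And>r a x l1 l2. D (csmul C r a) x l1 l2 = r * D a x l1 l2"
    "\<And>a x l1 l2. D (cder C a) x l1 l2 = - l1 * D a x l1 l2"
    using gen_act_divided_difference[OF cm] by blast
  define \<chi> where "\<chi> a b x l1 l2 = poly (G b) (- l2) * D a x l1 l2" for a b and x l1 l2 :: 'k
  have "cochain1 C (\<lambda>a x l. poly (G a) (- l))"
    unfolding cochain1_def by (simp add: G' poly2_comp_poly poly2_minus poly2_l)
  moreover have "cochain2 C \<chi>"
    unfolding cochain2_def
  proof (intro conjI allI)
    show "poly3 (\<chi> a b)" for a b
      unfolding \<chi>_def by (intro poly3_mult D(1) poly3_comp_poly poly3_minus poly3_l2)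
  qed (simp_all add: \<chi>_def G' D(3-5) algebra_simps)
  moreover have "hd1 C act (\<lambda>a x l. poly (G a) (- l)) a b x l1 l2 = (x + l1 + l2) * \<chi> a b x l1 l2"
    for a b x l1 l2
    unfolding hd1_conf_module_hom[OF cm ac G] D(2) \<chi>_def by (rule mult.left_commute)
  ultimately show ?thesis unfolding Z1_def by blast
qed

section \<open>The exceptional module \<open>M\<^sub>(\<^sub>0\<^sub>,\<^sub>1\<^sub>)\<close>\<close>

lemma exceptional_gen_mod_nprods:
  assumes cm: "conf_module C act" and Qv: "\<And>x l. gen_act act v x l = x + l"
  shows "mod_nprod act n v 1 = (if n = 0 then [:0, 1:] else if n = 1 then 1 else 0)"
    and "mod_nprod act n v [:0, 1:] =
      (if n = 0 then [:0, 0, 1:] else if n = 1 then [:0, 2:] else if n = 2 then [:2:] else 0)"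
proof -
  have "act v (poly 1) x l = (\<Sum>k<2. l ^ k / fact k * poly ([[:0, 1:], 1] ! k) x)" for x l
    by (simp add: act_poly_eq[OF cm] Qv numeral_2_eq_2)
  from mod_nprod_unique[OF cm this, of n] show "mod_nprod act n v 1 = (if n = 0 then [:0, 1:] else if n = 1 then 1 else 0)"
    by (auto simp: less_2_cases_iff)
  have "act v (poly [:0, 1:]) x l = (\<Sum>k<3. l ^ k / fact k * poly ([[:0, 0, 1:], [:0, 2:], [:2:]] ! k) x)"
    for x l
    by (simp add: act_poly_eq[OF cm] Qv eval_nat_numeral algebra_simps power2_eq_square)
  from mod_nprod_unique[OF cm this, of n] show "mod_nprod act n v [:0, 1:] =
      (if n = 0 then [:0, 0, 1:] else if n = 1 then [:0, 2:] else if n = 2 then [:2:] else 0)"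
    by (auto simp: eval_nat_numeral less_Suc_eq)
qed

lemma exceptional_cocycles:
  assumes U: "is_U3 C v" and cm: "conf_module C act" and Qv: "\<And>x l. gen_act act v x l = x + l"
  obtains \<phi>1 \<phi>2 where "\<phi>1 \<in> Z1 C act" "\<phi>2 \<in> Z1 C act" "\<And>x l. \<phi>1 v x l = 1" "\<And>x l. \<phi>2 v x l = - l"
proof -
  have ac: "assoc_conf C" and rels: "U3_rels C v" using U unfolding is_U3_def by blast+
  have "U3_rels (split_ext C act) (v, 1)" "U3_rels (split_ext C act) (v, [:0, 1:])"
    using rels unfolding U3_rels_def split_ext_simps
    by (simp_all add: exceptional_gen_mod_nprods[OF cm Qv])
  then obtain G1 G2 where G: "conf_module_hom C act G1" "G1 v = 1"
    "conf_module_hom C act G2" "G2 v = [:0, 1:]"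
    using exists_conf_module_hom[OF U cm] by metis
  show thesis
    by (rule that[OF conf_module_hom_Z1[OF cm ac G(1)] conf_module_hom_Z1[OF cm ac G(3)]])
      (simp_all add: G(2,4))
qed

lemma exceptional_independent:
  assumes cm: "conf_module C act" and Qv: "\<And>x l. gen_act act v x l = x + l"
    and v: "\<And>x l. \<xi> v x l = 1" "\<And>x l. \<eta> v x l = - l"
    and B: "(\<lambda>a x l. c1 * \<xi> a x l + c2 * \<eta> a x l) \<in> B1 C act"
  shows "c1 = 0 \<and> c2 = 0"
proof -
  obtain c where c: "\<And>a t. c1 * \<xi> a (- t) t + c2 * \<eta> a (- t) t = c * gen_act act a (- t) t"
    using B1_reduction[OF cm B] by blast
  have "c1 - c2 * t = 0" for t using c[of v t] by (simp add: Qv v)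
  from this[of 0] this[of 1] show ?thesis by simp
qed

lemma exceptional_spanning:
  fixes C :: "('k::field_char_0, 'c) conf_alg"
  assumes U: "is_U3 C v" and cm: "conf_module C act" and Qv: "\<And>x l. gen_act act v x l = x + l"
    and Z: "\<xi> \<in> Z1 C act" "\<eta> \<in> Z1 C act" "\<theta> \<in> Z1 C act"
    and v: "\<And>x l. \<xi> v x l = 1" "\<And>x l. \<eta> v x l = - l"
  shows "\<exists>c1 c2. (\<lambda>a x l. \<theta> a x l - (c1 * \<xi> a x l + c2 * \<eta> a x l)) \<in> B1 C act"
proof -
  have ac: "assoc_conf C" and rels: "U3_rels C v" and gen: "conf_generates C v"
    using U unfolding is_U3_def by blast+
  have "cochain1 C \<theta>" using Z(3) unfolding Z1_def by blast
  have "gen_act act v x l = 0 + x + 1 * l" for x l by (simp add: Qv)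
  then obtain p0 p1 where p: "\<And>t. \<theta> v (- t) t = p0 + p1 * t"
    using reduced_cocycle_gen_linear[OF ac rels _ one_neq_zero Z1_reduced_cocycle[OF cm Z(3)]
        poly2_antidiagonal[OF cochain1D(1)[OF \<open>cochain1 C \<theta>\<close>]]]
    by blast
  have "(\<lambda>a x l. (\<theta> a x l + (- p0) * \<xi> a x l) + p1 * \<eta> a x l) \<in> Z1 C act"
    by (intro Z1_add_scaled[OF cm] Z)
  hence "(\<lambda>a x l. (\<theta> a x l + (- p0) * \<xi> a x l) + p1 * \<eta> a x l) \<in> B1 C act"
    by (rule Z1_B1_if_gen_proportional[OF ac gen cm, where c = 0]) (simp add: p v)
  thus ?thesis by (intro exI[of _ p0] exI[of _ "- p1"]) (simp add: algebra_simps)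
qed

lemma quot_dim_eq_2I:
  assumes "\<phi>1 \<in> Z" "\<phi>2 \<in> Z" "\<phi>1 \<noteq> \<phi>2"
    and indep: "\<And>c1 c2. (\<lambda>a x l. c1 * \<phi>1 a x l + c2 * \<phi>2 a x l) \<in> B \<Longrightarrow> c1 = 0 \<and> c2 = 0"
    and span: "\<And>\<phi>. \<phi> \<in> Z \<Longrightarrow> \<exists>c1 c2. (\<lambda>a x l. \<phi> a x l - (c1 * \<phi>1 a x l + c2 * \<phi>2 a x l)) \<in> B"
  shows "quot_dim_eq Z B 2"
proof -
  have sum: "(\<Sum>s\<in>{\<phi>1, \<phi>2}. c s * s a x l) = c \<phi>1 * \<phi>1 a x l + c \<phi>2 * \<phi>2 a x l" for c a x l
    using assms(3) by simp
  have "\<forall>c. (\<lambda>a x l. \<Sum>s\<in>{\<phi>1, \<phi>2}. c s * s a x l) \<in> B \<longrightarrow> (\<forall>s\<in>{\<phi>1, \<phi>2}. c s = 0)"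
  proof (intro allI impI)
    fix c
    assume "(\<lambda>a x l. \<Sum>s\<in>{\<phi>1, \<phi>2}. c s * s a x l) \<in> B"
    hence "(\<lambda>a x l. c \<phi>1 * \<phi>1 a x l + c \<phi>2 * \<phi>2 a x l) \<in> B" by (simp only: sum)
    hence "c \<phi>1 = 0 \<and> c \<phi>2 = 0" by (rule indep)
    thus "\<forall>s\<in>{\<phi>1, \<phi>2}. c s = 0" by blast
  qed
  moreover have "\<forall>\<phi>\<in>Z. \<exists>c. (\<lambda>a x l. \<phi> a x l - (\<Sum>s\<in>{\<phi>1, \<phi>2}. c s * s a x l)) \<in> B"
  proof
    fix \<phi>
    assume "\<phi> \<in> Z"
    then obtain c1 c2 where "(\<lambda>a x l. \<phi> a x l - (c1 * \<phi>1 a x l + c2 * \<phi>2 a x l)) \<in> B"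
      using span by blast
    moreover define c where "c s = (if s = \<phi>1 then c1 else c2)" for s
    have "c \<phi>1 = c1" "c \<phi>2 = c2" using assms(3) by (simp_all add: c_def)
    ultimately show "\<exists>c. (\<lambda>a x l. \<phi> a x l - (\<Sum>s\<in>{\<phi>1, \<phi>2}. c s * s a x l)) \<in> B"
      by (intro exI[of _ c]) (simp only: sum)
  qed
  ultimately show ?thesis
    unfolding quot_dim_eq_def using assms(1-3) by (intro exI[of _ "{\<phi>1, \<phi>2}"]) simp
qed

lemma H1_dim_exceptional:
  fixes C :: "('k::field_char_0, 'c) conf_alg"
  assumes U: "is_U3 C v" and cm: "conf_module C act" and Qv: "\<And>x l. gen_act act v x l = x + l"
  shows "H1_dim_eq C act 2"
proof -
  obtain \<phi>1 \<phi>2 where Z: "\<phi>1 \<in> Z1 C act" "\<phi>2 \<in> Z1 C act"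
    and v: "\<And>x l. \<phi>1 v x l = 1" "\<And>x l. \<phi>2 v x l = - l"
    using exceptional_cocycles[OF U cm Qv] by blast
  have "\<phi>1 \<noteq> \<phi>2" using v[of 0 1] by auto
  show ?thesis
    unfolding H1_dim_eq_def
  proof (rule quot_dim_eq_2I[OF Z \<open>\<phi>1 \<noteq> \<phi>2\<close>])
    show "c1 = 0 \<and> c2 = 0" if "(\<lambda>a x l. c1 * \<phi>1 a x l + c2 * \<phi>2 a x l) \<in> B1 C act" for c1 c2
      by (rule exceptional_independent[where \<xi> = \<phi>1 and \<eta> = \<phi>2 and v = v, OF cm Qv v that])
    show "\<exists>c1 c2. (\<lambda>a x l. \<phi> a x l - (c1 * \<phi>1 a x l + c2 * \<phi>2 a x l)) \<in> B1 C act"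
      if "\<phi> \<in> Z1 C act" for \<phi>
      by (rule exceptional_spanning[where \<xi> = \<phi>1 and \<eta> = \<phi>2, OF U cm Qv Z that v])
  qed
qed

theorem theorem4p2:
  fixes C :: "('k::field_char_0, 'c) conf_alg" and v :: 'c
    and act :: "'c \<Rightarrow> ('k \<Rightarrow> 'k) \<Rightarrow> 'k \<Rightarrow> 'k \<Rightarrow> 'k"
    and \<alpha> \<Delta> :: 'k
  assumes "is_U3 C v"
    and "conf_module C act"
    and "\<forall>x l. act v (\<lambda>_. 1) x l = \<alpha> + x + \<Delta> * l"
    and "\<Delta> \<noteq> 0"
  shows "H1_dim_eq C act (if \<Delta> = 1 \<and> \<alpha> = 0 then 2 else 0)"
proof -
  have Qv: "gen_act act v x l = \<alpha> + x + \<Delta> * l" for x l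
    using assms(3) unfolding gen_act_def by blast
  show ?thesis
  proof (cases "\<Delta> = 1 \<and> \<alpha> = 0")
    case True
    hence "gen_act act v x l = x + l" for x l by (simp add: Qv)
    thus ?thesis unfolding if_P[OF True] by (rule H1_dim_exceptional[OF assms(1,2)])
  next
    case False
    show ?thesis
      unfolding if_not_P[OF False] by (rule H1_dim_generic[OF assms(1,2) Qv assms(4) False])
  qed
qed

end
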